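(* Let $\lambda\in\mathbb{C}^*$, $\alpha\in\mathbb{C}$, $h\in\mathbb{C}[t]$, and let $V$ be an irreducible $\mathrm{Vir}$-module on which $d_k$ acts locally finitely for all sufficiently large $k\in\mathbb{N}$. Let $W$ be a subspace of $\Omega(\lambda,\alpha,h)\otimes V$ which is stable under the action of $d_m$ for all sufficiently large $m$. Take any $w=\sum_{i=0}^r a_i(t)s^i\otimes v_i\in W$ with $a_i(t)\in\mathbb{C}[t]$ and $v_i\in V$. Then for every $0\le j\le r+2$, $$\sum_{i=j-2}^r\Big(\binom{i}{j}a_is^{i-j+1}-\binom{i}{j-1}G(a_i)s^{i-j+1}-\binom{i}{j-2}\alpha F(a_i)s^{i-j+2}\Big)\otimes v_i\in W,$$ with the convention $\binom{0}{0}=1$ and $\binom{i}{j}=0$ whenever $j>i$ or $j<0$ (terms with $i<0$ are absent). In particular: (1) (case $j=0$) $sw\in W$; (2) (case $j=r+1$) $G(a_r)\otimes v_r+\alpha F(a_{r-1})\otimes v_{r-1}\in W$; (3) (case $j=r+2$) $\alpha F(a_r)\otimes v_r\in W$.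
   Context: $\mathrm{Vir}$ is the Lie algebra with basis $\{d_i,c\mid i\in\mathbb{Z}\}$ and brackets $[d_i,d_j]=(j-i)d_{i+j}+\delta_{i,-j}\frac{i^3-i}{12}c$, $[c,d_i]=0$. For $\lambda\in\mathbb{C}^*$, $\alpha\in\mathbb{C}$, $h\in\mathbb{C}[t]$, define operators on $\mathbb{C}[t]$ by $F(f)=\frac{h(t)-h(\alpha)}{t-\alpha}f(t)-f'(t)$ and $G(f)=h(\alpha)f+tF(f)$. The $\mathrm{Vir}$-module $\Omega(\lambda,\alpha,h)$ is the vector space $\mathbb{C}[t,s]$ with $c$ acting as $0$ and $d_m(f(t)s^i)=\lambda^m(s-m)^i\big(sf+mG(f)-m^2\alpha F(f)\big)$ for $m\in\mathbb{Z}$, $i\in\mathbb{Z}_+$, $f\in\mathbb{C}[t]$. The tensor product $\Omega(\lambda,\alpha,h)\otimes V$ is the $\mathrm{Vir}$-module with $x(a\otimes v)=xa\otimes v+a\otimes xv$ for $x\in\mathrm{Vir}$. *)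

theory Defs
  imports "HOL-Analysis.Analysis" "HOL-Computational_Algebra.Polynomial"
begin

text \<open>Polynomials: \<open>complex poly\<close> is C[t]; \<open>complex poly poly\<close> is C[t,s] = (C[t])[s]
  (outer variable s, coefficients in C[t]).\<close>

definition tvar :: "complex poly" where "tvar = [:0, 1:]"

definition opF :: "complex \<Rightarrow> complex poly \<Rightarrow> complex poly \<Rightarrow> complex poly" where
  "opF \<alpha> h f = ((h - [:poly h \<alpha>:]) div [:-\<alpha>, 1:]) * f - pderiv f"

definition opG :: "complex \<Rightarrow> complex poly \<Rightarrow> complex poly \<Rightarrow> complex poly" where
  "opG \<alpha> h f = smult (poly h \<alpha>) f + tvar * opF \<alpha> h f"

text \<open>Action of d_m on the basis element f(t) s^i of Omega(lambda,alpha,h).\<close>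
definition dOm_mon :: "complex \<Rightarrow> complex \<Rightarrow> complex poly \<Rightarrow> int \<Rightarrow> complex poly \<Rightarrow> nat \<Rightarrow> complex poly poly" where
  "dOm_mon lam \<alpha> h m f i =
     smult [:lam powi m:] ([:[:- of_int m:], 1:] ^ i *
       ([:0, 1:] * [:f:] + [: smult (of_int m) (opG \<alpha> h f) - smult ((of_int m)^2 * \<alpha>) (opF \<alpha> h f) :]))"

definition dOm :: "complex \<Rightarrow> complex \<Rightarrow> complex poly \<Rightarrow> int \<Rightarrow> complex poly poly \<Rightarrow> complex poly poly" where
  "dOm lam \<alpha> h m p = (\<Sum>i\<le>degree p. dOm_mon lam \<alpha> h m (coeff p i) i)"

text \<open>The tensor product C[t,s] \<otimes> V is modelled (canonically) as V[t,s], i.e. \<open>'v poly poly\<close>.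
  Pure tensor p \<otimes> v:\<close>
definition tens :: "(complex \<Rightarrow> 'v \<Rightarrow> 'v::ab_group_add) \<Rightarrow> complex poly poly \<Rightarrow> 'v \<Rightarrow> 'v poly poly" where
  "tens sc p v = map_poly (map_poly (\<lambda>c. sc c v)) p"

definition tscale :: "(complex \<Rightarrow> 'v \<Rightarrow> 'v::ab_group_add) \<Rightarrow> complex \<Rightarrow> 'v poly poly \<Rightarrow> 'v poly poly" where
  "tscale sc c X = map_poly (map_poly (sc c)) X"

text \<open>Action of d_m on Omega \<otimes> V: x(a \<otimes> v) = xa \<otimes> v + a \<otimes> xv, extended linearly
  over the basis t^j s^i \<otimes> X_{ij}.\<close>
definition dT :: "(complex \<Rightarrow> 'v \<Rightarrow> 'v::ab_group_add) \<Rightarrow> (int \<Rightarrow> 'v \<Rightarrow> 'v) \<Rightarrow>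
     complex \<Rightarrow> complex \<Rightarrow> complex poly \<Rightarrow> int \<Rightarrow> 'v poly poly \<Rightarrow> 'v poly poly" where
  "dT sc d lam \<alpha> h m X =
     (\<Sum>i\<le>degree X. \<Sum>j\<le>degree (coeff X i).
        tens sc (dOm lam \<alpha> h m (monom (monom 1 j) i)) (coeff (coeff X i) j)
        + monom (monom (d m (coeff (coeff X i) j)) j) i)"

definition vir_module :: "(complex \<Rightarrow> 'v \<Rightarrow> 'v::ab_group_add) \<Rightarrow> (int \<Rightarrow> 'v \<Rightarrow> 'v) \<Rightarrow> ('v \<Rightarrow> 'v) \<Rightarrow> bool" where
  "vir_module sc d cc \<longleftrightarrow> vector_space sc \<and>
     (\<forall>k. Vector_Spaces.linear sc sc (d k)) \<and> Vector_Spaces.linear sc sc cc \<and>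
     (\<forall>i j v. d i (d j v) - d j (d i v) =
         sc (of_int (j - i)) (d (i + j) v)
         + (if i = - j then sc (of_int (i^3 - i) / 12) (cc v) else 0)) \<and>
     (\<forall>i v. cc (d i v) = d i (cc v))"

definition vir_submodule :: "(complex \<Rightarrow> 'v \<Rightarrow> 'v::ab_group_add) \<Rightarrow> (int \<Rightarrow> 'v \<Rightarrow> 'v) \<Rightarrow> ('v \<Rightarrow> 'v) \<Rightarrow> 'v set \<Rightarrow> bool" where
  "vir_submodule sc d cc U \<longleftrightarrow> module.subspace sc U \<and>
     (\<forall>k. \<forall>u\<in>U. d k u \<in> U) \<and> (\<forall>u\<in>U. cc u \<in> U)"

definition irreducible_vir :: "(complex \<Rightarrow> 'v \<Rightarrow> 'v::ab_group_add) \<Rightarrow> (int \<Rightarrow> 'v \<Rightarrow> 'v) \<Rightarrow> ('v \<Rightarrow> 'v) \<Rightarrow> bool" where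
  "irreducible_vir sc d cc \<longleftrightarrow> vir_module sc d cc \<and> (UNIV :: 'v set) \<noteq> {0} \<and>
     (\<forall>U. vir_submodule sc d cc U \<longrightarrow> U = {0} \<or> U = UNIV)"

definition locally_finite_op :: "(complex \<Rightarrow> 'v \<Rightarrow> 'v::ab_group_add) \<Rightarrow> ('v \<Rightarrow> 'v) \<Rightarrow> bool" where
  "locally_finite_op sc f \<longleftrightarrow> (\<forall>v. \<exists>B. finite B \<and> (\<forall>n. (f ^^ n) v \<in> module.span sc B))"

definition gbin :: "nat \<Rightarrow> int \<Rightarrow> complex" where
  "gbin i k = (if k < 0 then 0 else of_nat (i choose nat k))"

end

theory Submission
  imports Defs "HOL-Computational_Algebra.Fundamental_Theorem_Algebra"
begin

text \<open>
  For \<open>m\<close> so large that \<open>d\<^sub>m\<close> kills the finitely many \<open>v\<^sub>i\<close>, \<open>d\<^sub>m w\<close> is \<open>\<lambda>\<^sup>m\<close> times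
  a polynomial in \<open>m\<close> with vector coefficients, the coefficient of \<open>(-m)\<^sup>j\<close> being the \<open>j\<close>-th
  vector of the statement. \<open>W\<close> contains its values at all large \<open>m\<close>, so taking finite
  differences puts every coefficient into \<open>W\<close>.

  That every vector of \<open>V\<close> is killed by \<open>d\<^sub>m\<close> for \<open>m \<gg> 0\<close> is where irreducibility enters.
  Local finiteness gives an eigenvector \<open>v\<close> of some \<open>d\<^sub>n\<close>, \<open>n \<ge> 1\<close>, say with eigenvalue
  \<open>\<mu>\<close>. For \<open>n < r\<close>, a nonzero root of the minimal polynomial of \<open>d\<^sub>n - \<mu>\<close> on \<open>d\<^sub>r v\<close>
  is impossible: bracketing this relation, moved to \<open>d\<^sub>r\<^sub>+\<^sub>a\<^sub>n v\<close>, with an annihilating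
  relation of \<open>d\<^sub>2\<^sub>n v\<close> yields for every \<open>a\<close> an identity which, read as a rational function
  of \<open>a\<close>, has a pole in only one of its terms. So that minimal polynomial is a power of \<open>x\<close>,
  and \<open>d\<^sub>r\<^sub>+\<^sub>L\<^sub>n v = 0\<close> for \<open>L \<gg> 0\<close>. Hence the vectors killed by all \<open>d\<^sub>m\<close>, \<open>m \<gg> 0\<close>,
  form a nonzero submodule, which is \<open>V\<close>.
\<close>

section \<open>Polynomials in a linear operator\<close>

lemmas linear_map_add = module_hom.add[OF module_hom_linearI]
lemmas linear_map_scale = module_hom.scale[OF module_hom_linearI]
lemmas linear_map_zero = module_hom.zero[OF module_hom_linearI]
lemmas linear_map_sum = module_hom.sum[OF module_hom_linearI]

definition poly_op :: "('a::field \<Rightarrow> 'b::ab_group_add \<Rightarrow> 'b) \<Rightarrow> ('b \<Rightarrow> 'b) \<Rightarrow> 'a poly \<Rightarrow> 'b \<Rightarrow> 'b" where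
  "poly_op sc T p u = (\<Sum>i\<le>degree p. sc (coeff p i) ((T^^i) u))"

context vector_space
begin

lemma linear_funpow: "Vector_Spaces.linear scale scale T \<Longrightarrow> Vector_Spaces.linear scale scale (T^^n)"
proof (induction n)
  case 0
  then show ?case using linear_id by (simp add: id_def)
next
  case (Suc n)
  have "Vector_Spaces.linear scale scale (T \<circ> T^^n)"
    by (rule Vector_Spaces.linear_compose[OF Suc.IH[OF Suc.prems] Suc.prems])
  then show ?case by (simp add: comp_def)
qed

lemma linear_shift:
  assumes linS: "Vector_Spaces.linear scale scale S"
  shows "Vector_Spaces.linear scale scale (\<lambda>x. S x - \<mu> *s x)"
  unfolding Vector_Spaces.linear_iff
proof (intro conjI allI vector_space_axioms)
  fix x y show "S (x + y) - \<mu> *s (x + y) = (S x - \<mu> *s x) + (S y - \<mu> *s y)"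
    by (simp add: linear_map_add[OF linS] scale_right_distrib algebra_simps)
next
  fix c x show "S (c *s x) - \<mu> *s (c *s x) = c *s (S x - \<mu> *s x)"
    by (simp add: linear_map_scale[OF linS] scale_right_diff_distrib mult.commute)
qed

lemma poly_op_bound: "degree p \<le> K \<Longrightarrow> poly_op scale T p u = (\<Sum>i\<le>K. coeff p i *s (T^^i) u)"
  unfolding poly_op_def by (rule sum.mono_neutral_left) (auto simp: coeff_eq_0)

lemma poly_op_0 [simp]: "poly_op scale T 0 u = 0"
  by (simp add: poly_op_def)

lemma poly_op_const: "poly_op scale T [:c:] u = c *s u"
  by (simp add: poly_op_def)

lemma poly_op_add: "poly_op scale T (p + q) u = poly_op scale T p u + poly_op scale T q u"
proof -
  let ?K = "max (degree p) (degree q)"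
  have "degree (p + q) \<le> ?K" by (simp add: degree_add_le)
  then show ?thesis
    by (simp add: poly_op_bound[of _ ?K] poly_op_bound[of p ?K] poly_op_bound[of q ?K]
        scale_left_distrib sum.distrib)
qed

lemma poly_op_smult: "poly_op scale T (smult c p) u = c *s poly_op scale T p u"
  by (simp add: poly_op_def scale_sum_right)

lemma poly_op_diff: "poly_op scale T (p - q) u = poly_op scale T p u - poly_op scale T q u"
  using poly_op_add[of T p "-q" u] poly_op_smult[of T "-1" q u] by simp

lemma poly_op_sum: "finite A \<Longrightarrow> poly_op scale T (\<Sum>x\<in>A. f x) u = (\<Sum>x\<in>A. poly_op scale T (f x) u)"
  by (induction A rule: finite_induct) (auto simp: poly_op_add)

lemma poly_op_monom: "poly_op scale T (monom c i) u = c *s (T^^i) u"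
proof -
  have "poly_op scale T (monom c i) u = (\<Sum>j\<le>i. coeff (monom c i) j *s (T^^j) u)"
    by (rule poly_op_bound) (simp add: degree_monom_le)
  also have "\<dots> = (\<Sum>j\<le>i. if j = i then c *s (T^^j) u else 0)"
    by (rule sum.cong) (auto simp: coeff_monom)
  finally show ?thesis by simp
qed

context
  fixes T assumes linT: "Vector_Spaces.linear scale scale T"
begin

lemma poly_op_zero_right [simp]: "poly_op scale T p 0 = 0"
  by (simp add: poly_op_def linear_map_zero[OF linear_funpow[OF linT]])

lemma poly_op_scale_right: "poly_op scale T p (c *s u) = c *s poly_op scale T p u"
  by (simp add: poly_op_def linear_map_scale[OF linear_funpow[OF linT]] scale_sum_right mult.commute)

lemma poly_op_commute_op: "T (poly_op scale T p u) = poly_op scale T p (T u)"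
  unfolding poly_op_def by (simp add: linear_map_sum[OF linT] linear_map_scale[OF linT] funpow_swap1)

lemma poly_op_pCons: "poly_op scale T (pCons a p) u = a *s u + poly_op scale T p (T u)"
proof -
  have "poly_op scale T (pCons a p) u = (\<Sum>i\<le>Suc (degree p). coeff (pCons a p) i *s (T^^i) u)"
    by (rule poly_op_bound) (simp add: degree_pCons_le)
  also have "\<dots> = a *s u + (\<Sum>i\<le>degree p. coeff p i *s (T^^i) (T u))"
    by (simp only: sum.atMost_Suc_shift coeff_pCons_0 coeff_pCons_Suc funpow_Suc_right comp_def
        funpow_0 id_apply)
  finally show ?thesis by (simp add: poly_op_def)
qed

lemma poly_op_mult: "poly_op scale T (p * q) u = poly_op scale T p (poly_op scale T q u)"
proof (induction p arbitrary: u rule: pCons_induct)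
  case 0
  then show ?case by simp
next
  case (pCons a p)
  have "poly_op scale T (pCons a p * q) u = a *s poly_op scale T q u + poly_op scale T (p * q) (T u)"
    by (simp add: poly_op_add poly_op_smult poly_op_pCons)
  also have "\<dots> = poly_op scale T (pCons a p) (poly_op scale T q u)"
    by (simp add: pCons.IH poly_op_pCons poly_op_commute_op)
  finally show ?case .
qed

lemma poly_op_commute: "poly_op scale T p (poly_op scale T q u) = poly_op scale T q (poly_op scale T p u)"
  by (metis poly_op_mult mult.commute)

text \<open>The annihilator of \<open>u\<close> is an ideal of the principal ideal domain of polynomials.\<close>
lemma annihilator_generator:
  assumes "p \<noteq> 0" "poly_op scale T p u = 0"
  obtains q where "q \<noteq> 0" "poly_op scale T q u = 0" "\<And>s. poly_op scale T s u = 0 \<Longrightarrow> q dvd s"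
proof -
  define A where "A = {q. q \<noteq> 0 \<and> poly_op scale T q u = 0}"
  obtain q where q: "q \<in> A" and qmin: "\<And>q'. q' \<in> A \<Longrightarrow> degree q \<le> degree q'"
    using assms ex_has_least_nat[of "\<lambda>q. q \<in> A" p degree] by (auto simp: A_def)
  have "q dvd s" if s: "poly_op scale T s u = 0" for s
  proof -
    have "poly_op scale T (s mod q) u = poly_op scale T s u - poly_op scale T (s div q * q) u"
      by (metis poly_op_add div_mult_mod_eq add_diff_cancel_left')
    also have "\<dots> = 0"
      using s q by (simp add: A_def poly_op_mult poly_op_commute[of "s div q" q])
    finally have "poly_op scale T (s mod q) u = 0" .
    moreover have "\<not> degree q \<le> degree (s mod q)" if "s mod q \<noteq> 0"
      using degree_mod_less[of q s] that q by (simp add: A_def)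
    ultimately have "s mod q = 0"
      using qmin by (auto simp: A_def)
    then show ?thesis by (simp add: dvd_eq_mod_eq_0)
  qed
  with q that show ?thesis by (auto simp: A_def)
qed

end

lemma finite_orbit_span_imp_annihilator:
  assumes fin: "finite B" and sp: "\<forall>n. (T^^n) u \<in> span B"
  shows "\<exists>p. p \<noteq> 0 \<and> poly_op scale T p u = 0"
proof (cases "inj_on (\<lambda>i. (T^^i) u) {..card B}")
  case False
  then obtain i j where ij: "i \<noteq> j" "(T^^i) u = (T^^j) u"
    unfolding inj_on_def by auto
  define p where "p = monom (1::'a) i - monom 1 j"
  have "coeff p i = 1" using ij by (simp add: p_def coeff_monom)
  then have "p \<noteq> 0" by auto
  moreover have "poly_op scale T p u = 0" using ij by (simp add: p_def poly_op_diff poly_op_monom)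
  ultimately show ?thesis by blast
next
  case True
  let ?A = "(\<lambda>i. (T^^i) u) ` {..card B}"
  have "dependent ?A"
  proof (rule ccontr)
    assume "independent ?A"
    from independent_span_bound[OF fin this] sp have "card ?A \<le> card B" by auto
    with True show False by (simp add: card_image)
  qed
  then obtain c where c: "\<exists>v\<in>?A. c v \<noteq> 0" "(\<Sum>v\<in>?A. c v *s v) = 0"
    using dependent_finite[of ?A] by auto
  define p where "p = (\<Sum>i\<le>card B. monom (c ((T^^i) u)) i)"
  have "poly_op scale T p u = (\<Sum>i\<le>card B. c ((T^^i) u) *s (T^^i) u)"
    by (simp add: p_def poly_op_sum poly_op_monom)
  also have "\<dots> = 0"
    using True c by (simp add: sum.reindex)
  finally have "poly_op scale T p u = 0" .
  moreover obtain i0 where i0: "i0 \<le> card B" "c ((T^^i0) u) \<noteq> 0" using c by auto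
  then have "coeff p i0 \<noteq> 0"
    by (simp add: p_def coeff_sum coeff_monom)
  then have "p \<noteq> 0" by auto
  ultimately show ?thesis by blast
qed

lemma orbit_span_shift:
  assumes linS: "Vector_Spaces.linear scale scale S" and sp: "\<forall>n. (S^^n) u \<in> span B"
  shows "((\<lambda>x. S x - \<mu> *s x)^^n) u \<in> span B"
proof -
  let ?R = "range (\<lambda>j. (S^^j) u)"
  have SR: "S x \<in> span ?R" if "x \<in> span ?R" for x
  proof -
    have "S x \<in> span (S ` ?R)"
      using that module_hom.span_image[OF module_hom_linearI[OF linS]] by blast
    also have "S ` ?R \<subseteq> ?R"
    proof (rule image_subsetI)
      fix y assume "y \<in> ?R"
      then obtain j where "y = (S^^j) u" by auto
      then show "S y \<in> ?R" by (intro range_eqI[where x="Suc j"]) simp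
    qed
    then have "span (S ` ?R) \<subseteq> span ?R" by (rule span_mono)
    finally show ?thesis .
  qed
  have "((\<lambda>x. S x - \<mu> *s x)^^n) u \<in> span ?R"
  proof (induction n)
    case 0
    then show ?case by (auto intro!: span_base range_eqI[where x=0])
  next
    case (Suc n)
    then show ?case by (auto intro!: span_diff span_scale SR)
  qed
  also have "span ?R \<subseteq> span B"
    using sp by (metis image_subsetI span_minimal subspace_span rangeE)
  finally show ?thesis .
qed

end

lemma locally_finite_shift_annihilator:
  fixes sc :: "complex \<Rightarrow> 'v::ab_group_add \<Rightarrow> 'v" and u :: 'v
  assumes vs: "vector_space sc" and linS: "Vector_Spaces.linear sc sc S"
    and lf: "locally_finite_op sc S"
  shows "\<exists>p. p \<noteq> 0 \<and> poly_op sc (\<lambda>x. S x - sc \<mu> x) p u = 0"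
proof -
  interpret V: vector_space sc by (rule vs)
  obtain B where B: "finite B" "\<forall>n. (S^^n) u \<in> V.span B"
    using lf unfolding locally_finite_op_def by blast
  then have "\<forall>n. ((\<lambda>x. S x - sc \<mu> x)^^n) u \<in> V.span B"
    using V.orbit_span_shift[OF linS] by blast
  with B(1) show ?thesis by (rule V.finite_orbit_span_imp_annihilator)
qed

lemma annihilated_imp_eigenvector:
  fixes sc :: "complex \<Rightarrow> 'v::ab_group_add \<Rightarrow> 'v"
  assumes vs: "vector_space sc" and linT: "Vector_Spaces.linear sc sc T"
  shows "p \<noteq> 0 \<Longrightarrow> u \<noteq> 0 \<Longrightarrow> poly_op sc T p u = 0 \<Longrightarrow> \<exists>\<mu> w. w \<noteq> 0 \<and> T w = sc \<mu> w"
proof (induction "degree p" arbitrary: p rule: less_induct)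
  case less
  interpret V: vector_space sc by (rule vs)
  show ?case
  proof (cases "degree p = 0")
    case True
    then obtain k where "p = [:k:]" by (metis degree_eq_zeroE)
    with less.prems show ?thesis by (auto simp: V.poly_op_const)
  next
    case False
    then obtain \<mu> where "poly p \<mu> = 0" using alg_closed_imp_poly_has_root by blast
    then obtain p2 where p2: "p = [:-\<mu>, 1:] * p2" by (metis dvdE poly_eq_0_iff_dvd)
    have p2nz: "p2 \<noteq> 0" using less.prems p2 by auto
    have "degree p = degree [:-\<mu>, 1:] + degree p2"
      by (subst p2, rule degree_mult_eq) (use p2nz in auto)
    then have dg: "degree p2 < degree p" by simp
    let ?w = "poly_op sc T p2 u"
    have "poly_op sc T [:-\<mu>, 1:] ?w = 0"
      using less.prems(3) p2 V.poly_op_mult[OF linT] by metis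
    then have eq: "T ?w = sc \<mu> ?w"
      by (simp add: V.poly_op_pCons[OF linT] V.poly_op_const add_eq_0_iff)
    show ?thesis
    proof (cases "?w = 0")
      case True
      from less.hyps[OF dg p2nz less.prems(2) True] show ?thesis .
    next
      case False
      with eq show ?thesis by blast
    qed
  qed
qed

lemma locally_finite_imp_eigenvector:
  fixes sc :: "complex \<Rightarrow> 'v::ab_group_add \<Rightarrow> 'v" and u :: 'v
  assumes vs: "vector_space sc" and linT: "Vector_Spaces.linear sc sc T"
    and lf: "locally_finite_op sc T" and u: "u \<noteq> 0"
  obtains \<mu> w where "w \<noteq> 0" "T w = sc \<mu> w"
proof -
  interpret V: vector_space sc by (rule vs)
  obtain p where "p \<noteq> 0" "poly_op sc T p u = 0"
    using locally_finite_shift_annihilator[OF vs linT lf, of 0 u] by auto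
  with annihilated_imp_eigenvector[OF vs linT _ u] that show ?thesis by blast
qed

section \<open>Irreducible modules with locally finite positive part are restricted\<close>

lemma vir_module_bracket:
  assumes "vir_module sc d cc" and "i + j \<noteq> 0"
  shows "d i (d j u) = d j (d i u) + sc (of_int (j - i)) (d (i + j) u)"
proof -
  have "i \<noteq> - j" using assms(2) by simp
  with assms(1) have "d i (d j u) - d j (d i u) = sc (of_int (j - i)) (d (i + j) u)"
    unfolding vir_module_def by simp
  then show ?thesis by (simp add: diff_eq_eq add.commute)
qed

definition shift_prod :: "int \<Rightarrow> int \<Rightarrow> nat \<Rightarrow> complex" where
  "shift_prod n k L = (\<Prod>l<L. of_int (k + int l * n - n))"

lemma shift_prod_Suc: "shift_prod n k (Suc L) = shift_prod n k L * of_int (k + int L * n - n)"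
  by (simp add: shift_prod_def)

lemma shift_prod_add:
  "shift_prod n k (m + t) = shift_prod n k m * (\<Prod>l<t. of_int (k + int (m + l) * n - n))"
  by (induction t) (simp_all add: shift_prod_def)

lemma shift_prod_nonzero:
  assumes "n \<ge> 1" "n < k"
  shows "shift_prod n k L \<noteq> 0"
proof -
  have "(of_int (k + int l * n - n) :: complex) \<noteq> 0" for l
    using assms mult_nonneg_nonneg[of "int l" n] by (simp only: of_int_eq_0_iff) linarith
  then show ?thesis
    unfolding shift_prod_def by (simp only: prod_zero_iff finite_lessThan) blast
qed

definition shift_factor :: "int \<Rightarrow> int \<Rightarrow> nat \<Rightarrow> complex poly" where
  "shift_factor n r l = [:of_int (r + int l * n - n), of_int n:]"

lemma poly_shift_factor_of_nat:
  "poly (shift_factor n r l) (of_nat a) = of_int (r + int (a + l) * n - n)"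
  by (simp add: shift_factor_def algebra_simps)

definition bracket_coeff :: "int \<Rightarrow> int \<Rightarrow> complex poly \<Rightarrow> complex poly \<Rightarrow> nat \<Rightarrow> nat \<Rightarrow> nat \<Rightarrow> complex" where
  "bracket_coeff n r q q' a i j =
     coeff q i * shift_prod n (r + int a * n) i * coeff q' j * shift_prod n (2*n) j
       * of_int (2*n + int j * n - (r + int a * n + int i * n)) / shift_prod n r (a+2+i+j)"

text \<open>At \<open>x = a\<close> this is \<open>bracket_coeff n r q q' a i j * c^(a+2+i+j)\<close> with the denominator
  \<open>shift_prod n r (a+2+i+j)\<close> cleared to the common one \<open>shift_prod n r (a+2+deg q+deg q')\<close>.\<close>
definition bracket_poly :: "int \<Rightarrow> int \<Rightarrow> complex \<Rightarrow> complex poly \<Rightarrow> complex poly \<Rightarrow> nat \<Rightarrow> nat \<Rightarrow> complex poly" where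
  "bracket_poly n r c q q' i j = smult (coeff q i * coeff q' j * shift_prod n (2*n) j * c^(i+j))
      ([:of_int (2*n + int j * n - r - int i * n), - of_int n:] * (\<Prod>l<i. shift_factor n r l)
        * (\<Prod>l<degree q + degree q' - (i+j). shift_factor n r (i+j+2+l)))"

lemma poly_bracket_poly_of_nat:
  assumes n1: "n \<ge> 1" and nr: "n < r" and c: "c \<noteq> 0"
    and ij: "i \<le> degree q" "j \<le> degree q'"
  shows "poly (bracket_poly n r c q q' i j) (of_nat a)
    = shift_prod n r (a+2+degree q+degree q') / c^(a+2) * (bracket_coeff n r q q' a i j * c^(a+2+i+j))"
proof -
  let ?D = "degree q + degree q' - (i+j)"
  have first: "poly (\<Prod>l<i. shift_factor n r l) (of_nat a) = shift_prod n (r + int a * n) i"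
    by (simp add: poly_prod poly_shift_factor_of_nat shift_prod_def algebra_simps)
  have "shift_prod n r (a+2+degree q+degree q') = shift_prod n r ((a+2+i+j) + ?D)"
    using ij by (simp add: algebra_simps)
  also have "\<dots> = shift_prod n r (a+2+i+j) * (\<Prod>l<?D. of_int (r + int (a+2+i+j + l) * n - n))"
    by (rule shift_prod_add)
  also have "(\<Prod>l<?D. of_int (r + int (a+2+i+j + l) * n - n))
      = poly (\<Prod>l<?D. shift_factor n r (i+j+2+l)) (of_nat a)"
    unfolding poly_prod poly_shift_factor_of_nat by (intro prod.cong refl) (simp add: algebra_simps)
  finally have last: "shift_prod n r (a+2+degree q+degree q')
      = shift_prod n r (a+2+i+j) * poly (\<Prod>l<?D. shift_factor n r (i+j+2+l)) (of_nat a)" .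
  have lin: "poly [:of_int (2*n + int j * n - r - int i * n), - of_int n:] (of_nat a)
      = (of_int (2*n + int j * n - (r + int a * n + int i * n)) :: complex)"
    by (simp add: algebra_simps)
  have field: "x * y * z * c^(i+j) * (l * f * p) = s * p / c^(a+2) * (x * f * y * z * l / s * c^(a+2+i+j))"
    if "s \<noteq> 0" for x y z l f p s :: complex
    using that c by (simp add: power_add)
  have "shift_prod n r (a+2+i+j) \<noteq> 0" using shift_prod_nonzero n1 nr by blast
  then show ?thesis
    unfolding bracket_poly_def bracket_coeff_def poly_smult poly_mult first last lin by (rule field)
qed

lemma poly_shift_factor_pole:
  assumes "n \<noteq> 0"
  shows "poly (shift_factor n r l) (- of_int (r + int P * n) / of_int n) = of_int ((int l - int P - 1) * n)"
  using assms by (simp add: shift_factor_def field_simps)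

lemma poly_bracket_poly_pole:
  fixes n r :: int
  assumes n1: "n \<ge> 1" and ij: "i \<le> degree q" "j \<le> degree q'"
    and not_top: "\<not> (i = degree q \<and> j = degree q')"
  defines "x0 \<equiv> - of_int (r + int (degree q + degree q') * n) / of_int n"
  shows "poly (bracket_poly n r c q q' i j) x0 = 0"
proof -
  define l0 where "l0 = degree q + degree q' - (i+j) - 1"
  have l0: "l0 < degree q + degree q' - (i+j)" "i+j+2+l0 = degree q + degree q' + 1"
    using ij not_top by (auto simp: l0_def)
  have "poly (shift_factor n r (i+j+2+l0)) x0 = 0"
    unfolding x0_def poly_shift_factor_pole[OF order.strict_trans2[OF zero_less_one n1, THEN less_imp_neq, symmetric]]
    by (simp only: l0(2) of_int_eq_0_iff) simp
  then have "poly (\<Prod>l<degree q + degree q' - (i+j). shift_factor n r (i+j+2+l)) x0 = 0"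
    using l0(1) unfolding poly_prod by (simp only: prod_zero_iff finite_lessThan) blast
  then show ?thesis by (simp add: bracket_poly_def)
qed

lemma poly_bracket_poly_top_nonzero:
  fixes n r :: int
  assumes n1: "n \<ge> 1" and c: "c \<noteq> 0" and q: "q \<noteq> 0" and q': "q' \<noteq> 0"
  defines "x0 \<equiv> - of_int (r + int (degree q + degree q') * n) / of_int n"
  shows "poly (bracket_poly n r c q q' (degree q) (degree q')) x0 \<noteq> 0"
proof -
  let ?p = "degree q" and ?p' = "degree q'"
  have nx: "of_int n * x0 = - of_int (r + int (?p + ?p') * n)"
    using n1 by (simp add: x0_def)
  have "poly [:of_int (2*n + int ?p' * n - r - int ?p * n), - of_int n:] x0
      = of_int (2*n + int ?p' * n - r - int ?p * n) - of_int n * x0"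
    by (simp add: algebra_simps)
  also have "\<dots> = of_int (2*n + int ?p' * n - r - int ?p * n + (r + int (?p + ?p') * n))"
    unfolding nx by simp
  also have "\<dots> = (of_int (2*n + 2 * int ?p' * n) :: complex)"
    by (rule arg_cong[where f=of_int]) (simp add: algebra_simps)
  finally have lin: "poly [:of_int (2*n + int ?p' * n - r - int ?p * n), - of_int n:] x0
      = (of_int (2*n + 2 * int ?p' * n) :: complex)" .
  have "(of_int (2*n + 2 * int ?p' * n) :: complex) \<noteq> 0"
    using n1 mult_nonneg_nonneg[of "int ?p'" n] by (simp only: of_int_eq_0_iff) linarith
  moreover have "poly (shift_factor n r l) x0 \<noteq> 0" if "l < ?p" for l
  proof -
    have "(int l - int (?p + ?p') - 1) * n \<noteq> 0" using that n1 by simp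
    then show ?thesis
      using n1 unfolding x0_def by (subst poly_shift_factor_pole) (simp_all only: of_int_eq_0_iff, simp)
  qed
  then have "poly (\<Prod>l<?p. shift_factor n r l) x0 \<noteq> 0"
    unfolding poly_prod by (simp only: prod_zero_iff finite_lessThan) blast
  moreover have "shift_prod n (2*n) ?p' \<noteq> 0" using shift_prod_nonzero n1 by simp
  ultimately show ?thesis
    unfolding bracket_poly_def poly_smult poly_mult lin using c q q' by simp
qed

text \<open>Clearing denominators turns the family of identities into a polynomial vanishing at every
  natural number; its value at the pole \<open>x0\<close> of only the top term is nonzero.\<close>
lemma bracket_sums_not_all_zero:
  assumes n1: "n \<ge> 1" and nr: "n < r" and c: "c \<noteq> 0" and q: "q \<noteq> 0" and q': "q' \<noteq> 0"
  shows "\<exists>a. (\<Sum>i\<le>degree q. \<Sum>j\<le>degree q'. bracket_coeff n r q q' a i j * c^(a+2+i+j)) \<noteq> 0"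
proof (rule ccontr)
  assume "\<not> ?thesis"
  then have H: "(\<Sum>i\<le>degree q. \<Sum>j\<le>degree q'. bracket_coeff n r q q' a i j * c^(a+2+i+j)) = 0" for a
    by blast
  define N where "N = (\<Sum>i\<le>degree q. \<Sum>j\<le>degree q'. bracket_poly n r c q q' i j)"
  have "poly N (of_nat a) = 0" for a
  proof -
    have "poly N (of_nat a) = (\<Sum>i\<le>degree q. \<Sum>j\<le>degree q'.
        shift_prod n r (a+2+degree q+degree q') / c^(a+2) * (bracket_coeff n r q q' a i j * c^(a+2+i+j)))"
      unfolding N_def poly_sum
      by (intro sum.cong refl, rule poly_bracket_poly_of_nat[OF n1 nr c]) auto
    also have "\<dots> = 0"
      by (simp only: sum_distrib_left[symmetric] H mult_zero_right)
    finally show ?thesis .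
  qed
  then have "range (of_nat :: nat \<Rightarrow> complex) \<subseteq> {x. poly N x = 0}" by auto
  moreover have "infinite (range (of_nat :: nat \<Rightarrow> complex))"
    by (rule range_inj_infinite) (simp add: inj_on_def)
  ultimately have "N = 0"
    using finite_subset poly_roots_finite by metis
  define x0 where "x0 = - of_int (r + int (degree q + degree q') * n) / (of_int n :: complex)"
  have pole: "poly (bracket_poly n r c q q' i j) x0 = 0"
    if "i \<le> degree q" "j \<le> degree q'" "\<not> (i = degree q \<and> j = degree q')" for i j
    unfolding x0_def using that by (rule poly_bracket_poly_pole[OF n1])
  have "poly N x0 = (\<Sum>i\<le>degree q. \<Sum>j\<le>degree q'.
      if i = degree q \<and> j = degree q' then poly (bracket_poly n r c q q' i j) x0 else 0)"
    unfolding N_def poly_sum by (intro sum.cong refl) (auto simp: pole)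
  moreover have "(\<Sum>j\<le>degree q'. if i = degree q \<and> j = degree q' then poly (bracket_poly n r c q q' i j) x0 else 0)
      = (if i = degree q then poly (bracket_poly n r c q q' i (degree q')) x0 else 0)" for i
    by (cases "i = degree q") simp_all
  ultimately have "poly N x0 = poly (bracket_poly n r c q q' (degree q) (degree q')) x0"
    by simp
  moreover have "poly (bracket_poly n r c q q' (degree q) (degree q')) x0 \<noteq> 0"
    unfolding x0_def by (rule poly_bracket_poly_top_nonzero[OF n1 c q q'])
  ultimately show False using \<open>N = 0\<close> by simp
qed

lemma vir_operator_sums_commutator:
  fixes sc :: "complex \<Rightarrow> 'v::ab_group_add \<Rightarrow> 'v" and d :: "int \<Rightarrow> 'v \<Rightarrow> 'v"
  assumes vs: "vector_space sc" and lin: "\<And>k. Vector_Spaces.linear sc sc (d k)"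
    and bracket: "\<And>i j u. i + j \<noteq> 0 \<Longrightarrow> d i (d j u) = d j (d i u) + sc (of_int (j - i)) (d (i + j) u)"
    and fin: "finite I" "finite J" and nz: "\<And>i j. i \<in> I \<Longrightarrow> j \<in> J \<Longrightarrow> A i + B j \<noteq> 0"
  shows "(\<Sum>i\<in>I. sc (\<alpha> i) (d (A i) (\<Sum>j\<in>J. sc (\<beta> j) (d (B j) u))))
       - (\<Sum>j\<in>J. sc (\<beta> j) (d (B j) (\<Sum>i\<in>I. sc (\<alpha> i) (d (A i) u))))
       = (\<Sum>i\<in>I. \<Sum>j\<in>J. sc (\<alpha> i * \<beta> j * of_int (B j - A i)) (d (A i + B j) u))"
proof -
  interpret V: vector_space sc by (rule vs)
  have "(\<Sum>j\<in>J. sc (\<beta> j) (d (B j) (\<Sum>i\<in>I. sc (\<alpha> i) (d (A i) u))))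
      = (\<Sum>i\<in>I. \<Sum>j\<in>J. sc (\<alpha> i * \<beta> j) (d (B j) (d (A i) u)))"
    by (simp add: linear_map_sum[OF lin] linear_map_scale[OF lin] V.scale_sum_right mult.commute
        sum.swap[of _ J])
  moreover have "sc (\<alpha> i * \<beta> j) (d (A i) (d (B j) u)) - sc (\<alpha> i * \<beta> j) (d (B j) (d (A i) u))
      = sc (\<alpha> i * \<beta> j * of_int (B j - A i)) (d (A i + B j) u)" if "i \<in> I" "j \<in> J" for i j
    using bracket[OF nz[OF that], of u] by (simp add: V.scale_right_diff_distrib[symmetric])
  ultimately show ?thesis
    by (simp add: linear_map_sum[OF lin] linear_map_scale[OF lin] V.scale_sum_right
        sum_subtractf[symmetric])
qed

context
  fixes sc :: "complex \<Rightarrow> 'v::ab_group_add \<Rightarrow> 'v" and d :: "int \<Rightarrow> 'v \<Rightarrow> 'v"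
    and n :: int and \<mu> :: complex and v :: 'v
  assumes vs: "vector_space sc" and lin: "\<And>k. Vector_Spaces.linear sc sc (d k)"
    and bracket: "\<And>i j u. i + j \<noteq> 0 \<Longrightarrow> d i (d j u) = d j (d i u) + sc (of_int (j - i)) (d (i + j) u)"
    and n1: "n \<ge> 1" and lfn: "locally_finite_op sc (d n)" and eigen: "d n v = sc \<mu> v"
begin

abbreviation dshift :: "'v \<Rightarrow> 'v" where
  "dshift \<equiv> \<lambda>x. d n x - sc \<mu> x"

lemma linear_dshift: "Vector_Spaces.linear sc sc dshift"
  using vector_space.linear_shift[OF vs lin] .

lemma dshift_funpow_d:
  assumes "k > 0"
  shows "(dshift^^L) (d k v) = sc (shift_prod n k L) (d (k + int L * n) v)"
proof (induction L)
  case 0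
  then show ?case using vs by (simp add: shift_prod_def vector_space.vector_space_assms(4))
next
  case (Suc L)
  interpret V: vector_space sc by (rule vs)
  let ?m = "k + int L * n"
  have "?m > 0" using assms n1 by (simp add: add_pos_nonneg)
  then have "d n (d ?m v) = d ?m (d n v) + sc (of_int (?m - n)) (d (?m + n) v)"
    using bracket[of n ?m v] n1 by (simp add: add.commute)
  then have step: "dshift (d ?m v) = sc (of_int (?m - n)) (d (?m + n) v)"
    by (simp add: eigen linear_map_scale[OF lin])
  have "(dshift^^Suc L) (d k v) = sc (shift_prod n k L) (dshift (d ?m v))"
    using Suc.IH by (simp add: linear_map_scale[OF lin] V.scale_right_diff_distrib mult.commute)
  also have "\<dots> = sc (shift_prod n k L * of_int (?m - n)) (d (?m + n) v)"
    by (simp only: step V.scale_scale)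
  also have "?m + n = k + int (Suc L) * n" by (simp add: algebra_simps)
  finally show ?case by (simp only: shift_prod_Suc)
qed

lemma d_as_dshift_funpow:
  assumes "n < r"
  shows "d (r + int L * n) v = sc (1 / shift_prod n r L) ((dshift^^L) (d r v))"
proof -
  interpret V: vector_space sc by (rule vs)
  show ?thesis
    using dshift_funpow_d[of r L] shift_prod_nonzero[OF n1 assms, of L] assms n1 by simp
qed

lemma annihilator_along_progression:
  assumes r: "n < r" and q: "poly_op sc dshift q (d r v) = 0"
  shows "(\<Sum>i\<le>degree q. sc (coeff q i * shift_prod n (r + int a * n) i) (d (r + int a * n + int i * n) v)) = 0"
proof -
  interpret V: vector_space sc by (rule vs)
  have k0: "r + int a * n > 0" using r n1 by (simp add: add_pos_nonneg)
  have "(\<Sum>i\<le>degree q. sc (coeff q i * shift_prod n (r + int a * n) i) (d (r + int a * n + int i * n) v))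
      = poly_op sc dshift q (d (r + int a * n) v)"
    by (simp add: poly_op_def dshift_funpow_d[OF k0])
  also have "\<dots> = sc (1 / shift_prod n r a) (poly_op sc dshift (q * monom 1 a) (d r v))"
    by (simp add: d_as_dshift_funpow[OF r] V.poly_op_mult[OF linear_dshift] V.poly_op_monom
        V.poly_op_scale_right[OF linear_dshift])
  also have "\<dots> = 0"
    by (simp add: mult.commute[of q] V.poly_op_mult[OF linear_dshift] q
        V.poly_op_zero_right[OF linear_dshift])
  finally show ?thesis .
qed

text \<open>Bracketing the relation \<open>q(d\<^sub>n - \<mu>) d\<^sub>r\<^sub>+\<^sub>a\<^sub>n v = 0\<close> with
  \<open>q'(d\<^sub>n - \<mu>) d\<^sub>2\<^sub>n v = 0\<close>, both rewritten as linear combinations of the \<open>d\<^sub>k v\<close>.\<close>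
lemma bracket_annihilator:
  assumes r: "n < r" and q: "poly_op sc dshift q (d r v) = 0"
    and q': "poly_op sc dshift q' (d (2*n) v) = 0"
  shows "poly_op sc dshift (\<Sum>i\<le>degree q. \<Sum>j\<le>degree q'. monom (bracket_coeff n r q q' a i j) (a+2+i+j))
    (d r v) = 0"
proof -
  interpret V: vector_space sc by (rule vs)
  define k where "k = r + int a * n"
  have k0: "k > 0" using r n1 by (simp add: k_def add_pos_nonneg)
  define \<alpha> where "\<alpha> i = coeff q i * shift_prod n k i" for i
  define \<beta> where "\<beta> j = coeff q' j * shift_prod n (2*n) j" for j
  define A where "A i = k + int i * n" for i
  define B where "B j = 2*n + int j * n" for j
  have Yv: "(\<Sum>i\<le>degree q. sc (\<alpha> i) (d (A i) v)) = 0"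
    using annihilator_along_progression[OF r q, of a] by (simp add: \<alpha>_def A_def k_def)
  have Y'v: "(\<Sum>j\<le>degree q'. sc (\<beta> j) (d (B j) v)) = 0"
    using annihilator_along_progression[of "2*n" q' 0] q' n1 by (simp add: \<beta>_def B_def)
  have pos: "A i + B j > 0" for i j
    using k0 n1 mult_nonneg_nonneg[of "int i" n] mult_nonneg_nonneg[of "int j" n]
    unfolding A_def B_def by linarith
  have "(\<Sum>i\<le>degree q. sc (\<alpha> i) (d (A i) (\<Sum>j\<le>degree q'. sc (\<beta> j) (d (B j) v))))
       - (\<Sum>j\<le>degree q'. sc (\<beta> j) (d (B j) (\<Sum>i\<le>degree q. sc (\<alpha> i) (d (A i) v))))
       = (\<Sum>i\<le>degree q. \<Sum>j\<le>degree q'. sc (\<alpha> i * \<beta> j * of_int (B j - A i)) (d (A i + B j) v))"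
  proof (rule vir_operator_sums_commutator[OF vs lin])
    show "d i (d j u) = d j (d i u) + sc (of_int (j - i)) (d (i + j) u)" if "i + j \<noteq> 0" for i j u
      using that by (rule bracket)
    show "A i + B j \<noteq> 0" for i j using pos[of i j] by simp
  qed simp_all
  then have bracket_zero: "(\<Sum>i\<le>degree q. \<Sum>j\<le>degree q'. sc (\<alpha> i * \<beta> j * of_int (B j - A i)) (d (A i + B j) v)) = 0"
    by (simp add: Yv Y'v linear_map_zero[OF lin])
  have summand: "sc (bracket_coeff n r q q' a i j) ((dshift^^(a+2+i+j)) (d r v))
      = sc (\<alpha> i * \<beta> j * of_int (B j - A i)) (d (A i + B j) v)" for i j
  proof -
    have AB: "A i + B j = r + int (a+2+i+j) * n"
      by (simp add: A_def B_def k_def algebra_simps)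
    have coeff: "bracket_coeff n r q q' a i j = \<alpha> i * \<beta> j * of_int (B j - A i) / shift_prod n r (a+2+i+j)"
      by (simp add: bracket_coeff_def \<alpha>_def \<beta>_def A_def B_def k_def mult.assoc)
    show ?thesis
      unfolding AB d_as_dshift_funpow[OF r] coeff by simp
  qed
  then show ?thesis
    by (simp only: V.poly_op_sum finite_atMost V.poly_op_monom summand bracket_zero)
qed

lemma annihilator_roots_zero:
  assumes r: "n < r" and q: "q \<noteq> 0" "poly_op sc dshift q (d r v) = 0"
    and gen: "\<And>s. poly_op sc dshift s (d r v) = 0 \<Longrightarrow> q dvd s" and root: "poly q c = 0"
  shows "c = 0"
proof (rule ccontr)
  assume c: "c \<noteq> 0"
  obtain q' where q': "q' \<noteq> 0" "poly_op sc dshift q' (d (2*n) v) = 0"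
    using locally_finite_shift_annihilator[OF vs lin lfn] by blast
  have "(\<Sum>i\<le>degree q. \<Sum>j\<le>degree q'. bracket_coeff n r q q' a i j * c^(a+2+i+j)) = 0" for a
  proof -
    define s where "s = (\<Sum>i\<le>degree q. \<Sum>j\<le>degree q'. monom (bracket_coeff n r q q' a i j) (a+2+i+j))"
    have "q dvd s" unfolding s_def by (rule gen[OF bracket_annihilator[OF r q(2) q'(2)]])
    then obtain t where "s = q * t" by (rule dvdE)
    then have "poly s c = 0" using root by simp
    then show ?thesis by (simp add: s_def poly_sum poly_monom)
  qed
  with bracket_sums_not_all_zero[OF n1 r c q(1) q'(1)] show False by blast
qed

lemma d_progression_eventually_zero:
  assumes r: "n < r"
  shows "\<exists>e. \<forall>L\<ge>e. d (r + int L * n) v = 0"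
proof -
  interpret V: vector_space sc by (rule vs)
  obtain p where "p \<noteq> 0" "poly_op sc dshift p (d r v) = 0"
    using locally_finite_shift_annihilator[OF vs lin lfn] by blast
  then obtain q where q: "q \<noteq> 0" "poly_op sc dshift q (d r v) = 0"
    and gen: "\<And>s. poly_op sc dshift s (d r v) = 0 \<Longrightarrow> q dvd s"
    using V.annihilator_generator[OF linear_dshift] by blast
  obtain e q1 where qd: "q = [:0, 1:]^e * q1" and nd: "\<not> [:0, 1:] dvd q1"
    using order_decomp[OF q(1), of 0] by auto
  have "degree q1 = 0"
  proof (rule ccontr)
    assume "degree q1 \<noteq> 0"
    then obtain c where c: "poly q1 c = 0" using alg_closed_imp_poly_has_root by blast
    then have "poly q c = 0" by (simp add: qd)
    then have "c = 0" using annihilator_roots_zero[of r q c] r q gen by blast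
    with c nd show False by (simp add: poly_eq_0_iff_dvd)
  qed
  then obtain k where k: "q1 = [:k:]" by (metis degree_eq_zeroE)
  have "k \<noteq> 0" using q(1) qd k by auto
  moreover have "q = monom k e" using qd k by (simp add: monom_altdef)
  then have "sc k ((dshift^^e) (d r v)) = 0"
    using q(2) by (simp add: V.poly_op_monom)
  ultimately have zero: "(dshift^^e) (d r v) = 0" by simp
  show ?thesis
  proof (intro exI allI impI)
    fix L assume "L \<ge> e"
    then have "(dshift^^L) (d r v) = (dshift^^(L - e)) ((dshift^^e) (d r v))"
      using funpow_add[of "L - e" e dshift] by simp
    then show "d (r + int L * n) v = 0"
      by (simp add: d_as_dshift_funpow[OF r] zero linear_map_zero[OF V.linear_funpow[OF linear_dshift]])
  qed
qed

lemma eigenvector_eventually_killed: "\<exists>M. \<forall>k\<ge>M. d k v = 0"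
proof -
  have "\<forall>r. \<exists>e. n < r \<longrightarrow> (\<forall>L\<ge>e. d (r + int L * n) v = 0)"
    using d_progression_eventually_zero by blast
  then obtain E where E: "\<And>r L. n < r \<Longrightarrow> L \<ge> E r \<Longrightarrow> d (r + int L * n) v = 0"
    by (metis choice)
  define Em where "Em = Max (E ` {n+1..2*n})"
  have "d k v = 0" if k: "k \<ge> 2*n + int Em * n + 1" for k
  proof -
    define r where "r = n + 1 + (k - n - 1) mod n"
    define L where "L = (k - n - 1) div n"
    have k_eq: "k = r + L * n"
      using div_mult_mod_eq[of "k - n - 1" n] by (simp add: r_def L_def algebra_simps)
    have "0 \<le> (k - n - 1) mod n" "(k - n - 1) mod n < n"
      using n1 by simp_all
    then have r_bounds: "n < r" "r \<le> 2*n" by (simp_all add: r_def)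
    have "int Em * n div n \<le> L"
      using k n1 unfolding L_def by (intro zdiv_mono1) auto
    then have "int Em \<le> L" using n1 by simp
    moreover have "E r \<le> Em"
      unfolding Em_def using r_bounds by (intro Max_ge) auto
    ultimately have "d (r + int (nat L) * n) v = 0"
      by (intro E r_bounds(1)) linarith
    then show ?thesis using \<open>int Em \<le> L\<close> k_eq by simp
  qed
  then show ?thesis by blast
qed

end

lemma eventually_killed_vir_submodule:
  assumes vm: "vir_module sc d cc"
  shows "vir_submodule sc d cc {u. \<exists>M. \<forall>k\<ge>M. d k u = 0}"
proof -
  have vs: "vector_space sc" and lin: "\<And>k. Vector_Spaces.linear sc sc (d k)"
    and linc: "Vector_Spaces.linear sc sc cc" and ccd: "\<And>i u. cc (d i u) = d i (cc u)"
    using vm by (auto simp: vir_module_def)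
  interpret V: vector_space sc by (rule vs)
  let ?S = "{u. \<exists>M. \<forall>k\<ge>M. d k u = 0}"
  have "V.subspace ?S"
  proof (rule V.subspaceI)
    show "0 \<in> ?S" by (auto simp: linear_map_zero[OF lin])
  next
    fix x y assume "x \<in> ?S" "y \<in> ?S"
    then obtain Mx My where "\<forall>k\<ge>Mx. d k x = 0" "\<forall>k\<ge>My. d k y = 0" by blast
    then show "x + y \<in> ?S" by (intro CollectI exI[of _ "max Mx My"]) (auto simp: linear_map_add[OF lin])
  next
    fix c x assume "x \<in> ?S"
    then obtain Mx where "\<forall>k\<ge>Mx. d k x = 0" by blast
    then show "sc c x \<in> ?S" by (intro CollectI exI[of _ Mx]) (auto simp: linear_map_scale[OF lin])
  qed
  moreover have "d j u \<in> ?S" if "u \<in> ?S" for j u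
  proof -
    obtain M where M: "\<forall>k\<ge>M. d k u = 0" using \<open>u \<in> ?S\<close> by blast
    have "d k (d j u) = 0" if "k \<ge> max M (max (M - j) (\<bar>j\<bar> + 1))" for k
    proof -
      have "k + j \<noteq> 0" "k \<ge> M" "k + j \<ge> M" using that by auto
      then show ?thesis
        using M vir_module_bracket[OF vm \<open>k + j \<noteq> 0\<close>, of u] by (simp add: linear_map_zero[OF lin])
    qed
    then show ?thesis by blast
  qed
  moreover have "cc u \<in> ?S" if "u \<in> ?S" for u
  proof -
    obtain M where "\<forall>k\<ge>M. d k u = 0" using \<open>u \<in> ?S\<close> by blast
    then have "\<forall>k\<ge>M. d k (cc u) = 0" by (simp add: ccd[symmetric] linear_map_zero[OF linc])
    then show ?thesis by blast
  qed
  ultimately show ?thesis by (simp add: vir_submodule_def)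
qed

theorem irreducible_vir_restricted:
  fixes sc :: "complex \<Rightarrow> 'v::ab_group_add \<Rightarrow> 'v" and d :: "int \<Rightarrow> 'v \<Rightarrow> 'v"
  assumes irr: "irreducible_vir sc d cc" and lf: "\<exists>N::int. \<forall>k\<ge>N. locally_finite_op sc (d k)"
  shows "\<exists>M. \<forall>k\<ge>M. d k u = 0"
proof -
  have vm: "vir_module sc d cc" using irr by (simp add: irreducible_vir_def)
  then have vs: "vector_space sc" and lin: "\<And>k. Vector_Spaces.linear sc sc (d k)"
    by (auto simp: vir_module_def)
  obtain N where N: "\<forall>k\<ge>N. locally_finite_op sc (d k)" using lf by blast
  define n where "n = max N 1"
  have n1: "n \<ge> 1" and lfn: "locally_finite_op sc (d n)" using N by (auto simp: n_def)
  have "UNIV \<noteq> {0::'v}" using irr by (simp add: irreducible_vir_def)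
  then obtain u0 :: 'v where "u0 \<noteq> 0" by blast
  then obtain \<mu> v where v: "v \<noteq> 0" "d n v = sc \<mu> v"
    using locally_finite_imp_eigenvector[OF vs lin lfn] by metis
  let ?S = "{u. \<exists>M. \<forall>k\<ge>M. d k u = 0}"
  have "v \<in> ?S"
    using eigenvector_eventually_killed[OF vs lin vir_module_bracket[OF vm] n1 lfn v(2)] by blast
  with v(1) have "?S \<noteq> {0}" by blast
  with irr eventually_killed_vir_submodule[OF vm] have "?S = UNIV"
    unfolding irreducible_vir_def by blast
  then show ?thesis by blast
qed

section \<open>Pure tensors and finite differences\<close>

lemma poly_poly_eqI: "(\<And>i j. coeff (coeff X i) j = coeff (coeff Y i) j) \<Longrightarrow> X = Y"
  by (rule poly_eqI, rule poly_eqI) simp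

context
  fixes sc :: "complex \<Rightarrow> 'v::ab_group_add \<Rightarrow> 'v"
  assumes vs: "vector_space sc"
begin

lemma coeff_coeff_tens: "coeff (coeff (tens sc p u) i) j = sc (coeff (coeff p i) j) u"
proof -
  interpret V: vector_space sc by (rule vs)
  show ?thesis by (simp add: tens_def coeff_map_poly)
qed

lemma coeff_coeff_tscale: "coeff (coeff (tscale sc c X) i) j = sc c (coeff (coeff X i) j)"
proof -
  interpret V: vector_space sc by (rule vs)
  show ?thesis by (simp add: tscale_def coeff_map_poly)
qed

lemma module_tscale: "module (tscale sc)"
proof -
  interpret V: vector_space sc by (rule vs)
  show ?thesis
    by unfold_locales
      (auto intro!: poly_poly_eqI simp: coeff_coeff_tscale V.scale_right_distrib V.scale_left_distrib)
qed

lemma tens_add_left: "tens sc (p + q) u = tens sc p u + tens sc q u"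
  using vs by (intro poly_poly_eqI) (simp add: coeff_coeff_tens vector_space.vector_space_assms(2))

lemma tens_zero_left [simp]: "tens sc 0 u = 0"
  using vs by (intro poly_poly_eqI) (simp add: coeff_coeff_tens module.scale_zero_left[OF module_iff_vector_space[THEN iffD2, OF vs]])

lemma tens_zero_right [simp]: "tens sc p 0 = 0"
  using vs by (intro poly_poly_eqI) (simp add: coeff_coeff_tens module.scale_zero_right[OF module_iff_vector_space[THEN iffD2, OF vs]])

lemma tens_minus_left: "tens sc (- p) u = - tens sc p u"
  using vs by (intro poly_poly_eqI) (simp add: coeff_coeff_tens module.scale_minus_left[OF module_iff_vector_space[THEN iffD2, OF vs]])

lemma tens_const_uminus: "tens sc [:- x:] u = - tens sc [:x:] u"
  using tens_minus_left[of "[:x:]" u] by simp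

lemma tens_diff_left: "tens sc (p - q) u = tens sc p u - tens sc q u"
  using tens_add_left[of p "-q" u] tens_minus_left[of q u] by simp

lemma tens_sum_left: "finite A \<Longrightarrow> tens sc (\<Sum>x\<in>A. f x) u = (\<Sum>x\<in>A. tens sc (f x) u)"
  by (induction A rule: finite_induct) (simp_all add: tens_add_left)

lemma tens_scale_right: "tens sc p (sc c u) = tens sc (smult [:c:] p) u"
  using vs by (intro poly_poly_eqI) (simp add: coeff_coeff_tens vector_space.vector_space_assms(3) mult.commute)

lemma tscale_tens: "tscale sc c (tens sc p u) = tens sc (smult [:c:] p) u"
  using vs by (intro poly_poly_eqI) (simp add: coeff_coeff_tens coeff_coeff_tscale vector_space.vector_space_assms(3))

end

lemma of_nat_Suc_power_diff:
  "(of_nat (Suc m) :: 'a::comm_ring_1) ^ l - of_nat m ^ l = (\<Sum>j<l. of_nat (l choose j) * of_nat m ^ j)"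
proof -
  have "(of_nat (Suc m) :: 'a) ^ l = (\<Sum>j\<le>l. of_nat (l choose j) * of_nat m ^ j)"
    using binomial_ring[of "of_nat m :: 'a" 1 l] by (simp add: add.commute)
  then show ?thesis by (simp add: lessThan_Suc_atMost[symmetric])
qed

context module
begin

lemma sum_powers_difference:
  "(\<Sum>j\<le>Suc J. scale (of_nat (Suc m) ^ j) (X j)) - (\<Sum>j\<le>Suc J. scale (of_nat m ^ j) (X j))
     = (\<Sum>j\<le>J. scale (of_nat m ^ j) (\<Sum>l\<in>{Suc j..Suc J}. scale (of_nat (l choose j)) (X l)))"
proof -
  have "(\<Sum>j\<le>Suc J. scale (of_nat (Suc m) ^ j) (X j)) - (\<Sum>j\<le>Suc J. scale (of_nat m ^ j) (X j))
      = (\<Sum>l\<le>Suc J. \<Sum>j<l. scale (of_nat (l choose j) * of_nat m ^ j) (X l))"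
    by (simp only: sum_subtractf[symmetric] scale_left_diff_distrib[symmetric] of_nat_Suc_power_diff
        scale_sum_left)
  also have "\<dots> = (\<Sum>l\<le>Suc J. \<Sum>j\<le>J. if j < l then scale (of_nat (l choose j) * of_nat m ^ j) (X l) else 0)"
    by (intro sum.cong refl sum.mono_neutral_cong_left) auto
  also have "\<dots> = (\<Sum>j\<le>J. \<Sum>l\<in>{Suc j..Suc J}. scale (of_nat (l choose j) * of_nat m ^ j) (X l))"
    by (subst sum.swap) (intro sum.cong refl sum.mono_neutral_cong_right; auto)
  also have "\<dots> = (\<Sum>j\<le>J. scale (of_nat m ^ j) (\<Sum>l\<in>{Suc j..Suc J}. scale (of_nat (l choose j)) (X l)))"
    by (simp only: scale_sum_right scale_scale mult.commute)
  finally show ?thesis .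
qed

end

lemma subspace_coeffs_of_polynomial_values:
  fixes s :: "complex \<Rightarrow> 'x::ab_group_add \<Rightarrow> 'x"
  assumes md: "module s" and sub: "module.subspace s W"
  shows "(\<And>m::nat. m \<ge> M \<Longrightarrow> (\<Sum>j\<le>J. s (of_nat m ^ j) (X j)) \<in> W) \<Longrightarrow> j \<le> J \<Longrightarrow> X j \<in> W"
proof (induction J arbitrary: X j)
  case 0
  interpret Mo: module s by (rule md)
  show ?case using "0.prems"(1)[of M] "0.prems"(2) by simp
next
  case (Suc J)
  interpret Mo: module s by (rule md)
  define X' where "X' j = (\<Sum>l\<in>{Suc j..Suc J}. s (of_nat (l choose j)) (X l))" for j
  have "(\<Sum>j\<le>J. s (of_nat m ^ j) (X' j)) \<in> W" if "m \<ge> M" for m :: nat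
  proof -
    have "(\<Sum>j\<le>Suc J. s (of_nat (Suc m) ^ j) (X j)) \<in> W" "(\<Sum>j\<le>Suc J. s (of_nat m ^ j) (X j)) \<in> W"
      by (rule Suc.prems(1), use that in simp)+
    from Mo.subspace_diff[OF sub this] show ?thesis
      unfolding X'_def Mo.sum_powers_difference .
  qed
  then have X'W: "X' j \<in> W" if "j \<le> J" for j using Suc.IH that by blast
  have "X' J = s (of_nat (Suc J)) (X (Suc J))" by (simp add: X'_def)
  then have top: "X (Suc J) \<in> W"
    using X'W[of J] Mo.subspace_scale[OF sub, of "X' J" "1 / of_nat (Suc J)"]
    by (simp del: of_nat_Suc)
  show ?case
  proof (cases "j = Suc J")
    case True
    then show ?thesis using top by simp
  next
    case False
    have "(\<Sum>j\<le>J. s (of_nat m ^ j) (X j)) \<in> W" if "m \<ge> M" for m :: nat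
      using Mo.subspace_diff[OF sub Suc.prems(1)[OF that] Mo.subspace_scale[OF sub top, of "of_nat m ^ Suc J"]]
      by simp
    with False Suc.prems(2) show ?thesis using Suc.IH[of X j] by simp
  qed
qed

section \<open>The action of \<open>d\<^sub>m\<close> as a polynomial in \<open>m\<close>\<close>

lemma gbin_of_nat [simp]: "gbin i (int k) = of_nat (i choose k)" by (simp add: gbin_def)
lemma gbin_neg [simp]: "k < 0 \<Longrightarrow> gbin i k = 0" by (simp add: gbin_def)

lemma gbin_gt: "int i < k \<Longrightarrow> gbin i k = 0"
  by (simp add: gbin_def binomial_eq_0 nat_less_iff)

lemma gbin_pred: "gbin i (int i - 1) = of_nat i"
proof (cases i)
  case 0 then show ?thesis by simp
next
  case (Suc i0)
  have "int (Suc i0) - 1 = int i0" by simp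
  then show ?thesis using Suc by (simp add: binomial_symmetric[of i0 "Suc i0", symmetric])
qed

lemma opF_add: "opF \<alpha> h (f + g) = opF \<alpha> h f + opF \<alpha> h g"
  by (simp add: opF_def pderiv_add algebra_simps)
lemma opF_smult: "opF \<alpha> h (smult x f) = smult x (opF \<alpha> h f)"
  by (simp add: opF_def pderiv_smult smult_diff_right)
lemma opF_0 [simp]: "opF \<alpha> h 0 = 0" by (simp add: opF_def)
lemma opG_add: "opG \<alpha> h (f + g) = opG \<alpha> h f + opG \<alpha> h g"
  by (simp add: opG_def opF_add algebra_simps smult_add_right)
lemma opG_smult: "opG \<alpha> h (smult x f) = smult x (opG \<alpha> h f)"
  by (simp add: opG_def opF_smult smult_add_right mult.commute)
lemma opG_0 [simp]: "opG \<alpha> h 0 = 0" by (simp add: opG_def)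

lemma dOm_mon_add: "dOm_mon lam \<alpha> h m (f + g) i = dOm_mon lam \<alpha> h m f i + dOm_mon lam \<alpha> h m g i"
proof -
  have "[:0, 1:] * [:f + g:] + [: smult (of_int m) (opG \<alpha> h (f+g)) - smult ((of_int m)^2 * \<alpha>) (opF \<alpha> h (f+g)) :]
     = ([:0, 1:] * [:f:] + [: smult (of_int m) (opG \<alpha> h f) - smult ((of_int m)^2 * \<alpha>) (opF \<alpha> h f) :])
     + ([:0, 1:] * [:g:] + [: smult (of_int m) (opG \<alpha> h g) - smult ((of_int m)^2 * \<alpha>) (opF \<alpha> h g) :])"
    by (simp add: opF_add opG_add smult_add_right algebra_simps)
  note eq = this
  show ?thesis unfolding dOm_mon_def eq by (simp only: distrib_left smult_add_right)
qed

lemma dOm_mon_smult: "dOm_mon lam \<alpha> h m (smult x f) i = smult [:x:] (dOm_mon lam \<alpha> h m f i)"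
proof -
  have "[:0, 1:] * [:smult x f:] + [: smult (of_int m) (opG \<alpha> h (smult x f)) - smult ((of_int m)^2 * \<alpha>) (opF \<alpha> h (smult x f)) :]
     = smult [:x:] ([:0, 1:] * [:f:] + [: smult (of_int m) (opG \<alpha> h f) - smult ((of_int m)^2 * \<alpha>) (opF \<alpha> h f) :])"
    by (simp add: opF_smult opG_smult smult_diff_right mult.commute)
  note eq = this
  show ?thesis unfolding dOm_mon_def eq by (simp only: mult_smult_right smult_smult mult.commute)
qed

lemma dOm_mon_0 [simp]: "dOm_mon lam \<alpha> h m 0 i = 0"
  by (simp add: dOm_mon_def)

lemma dOm_mon_sum: "finite A \<Longrightarrow> dOm_mon lam \<alpha> h m (\<Sum>x\<in>A. f x) i = (\<Sum>x\<in>A. dOm_mon lam \<alpha> h m (f x) i)"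
  by (induction A rule: finite_induct) (simp_all add: dOm_mon_add)

lemma dOm_monom: "dOm lam \<alpha> h m (monom g i) = dOm_mon lam \<alpha> h m g i"
proof (cases "g = 0")
  case True then show ?thesis by (simp add: dOm_def)
next
  case False
  have "dOm lam \<alpha> h m (monom g i) = (\<Sum>i'\<le>i. dOm_mon lam \<alpha> h m (if i = i' then g else 0) i')"
    using False by (simp add: dOm_def degree_monom_eq coeff_monom)
  also have "\<dots> = (\<Sum>i'\<le>i. if i' = i then dOm_mon lam \<alpha> h m g i else 0)"
    by (intro sum.cong refl) auto
  finally show ?thesis by simp
qed

definition dOm_coeff :: "complex \<Rightarrow> complex poly \<Rightarrow> nat \<Rightarrow> nat \<Rightarrow> complex poly \<Rightarrow> complex poly poly" where
  "dOm_coeff \<alpha> h j i f = monom (smult (gbin i (int j)) f) (i + 1 - j)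
       - monom (smult (gbin i (int j - 1)) (opG \<alpha> h f)) (i + 1 - j)
       - monom (smult (gbin i (int j - 2) * \<alpha>) (opF \<alpha> h f)) (i + 2 - j)"

lemma sum_gbin_monom:
  fixes c :: complex
  shows "(\<Sum>j\<le>Suc (Suc i). monom (smult (c^j * gbin i (int j)) f) (i + 1 - j))
       = (\<Sum>k\<le>i. monom (smult (of_nat (i choose k) * c^k) f) (Suc (i - k)))"
proof -
  have "(\<Sum>j\<le>Suc (Suc i). monom (smult (c^j * gbin i (int j)) f) (i + 1 - j))
      = (\<Sum>j\<le>i. monom (smult (c^j * gbin i (int j)) f) (i + 1 - j))"
    by (simp add: gbin_def binomial_eq_0)
  also have "\<dots> = (\<Sum>k\<le>i. monom (smult (of_nat (i choose k) * c^k) f) (Suc (i - k)))"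
    by (intro sum.cong refl) (auto simp: Suc_diff_le mult.commute)
  finally show ?thesis .
qed

lemma sum_gbin_pred_monom:
  fixes c :: complex
  shows "(\<Sum>j\<le>Suc (Suc i). monom (smult (c^j * gbin i (int j - 1)) G) (i + 1 - j))
       = (\<Sum>k\<le>i. monom (smult (of_nat (i choose k) * c^(Suc k)) G) (i - k))"
proof -
  have "(\<Sum>j\<le>Suc (Suc i). monom (smult (c^j * gbin i (int j - 1)) G) (i + 1 - j))
      = monom (smult (c^0 * gbin i (int 0 - 1)) G) (i + 1 - 0)
        + (\<Sum>k\<le>Suc i. monom (smult (c^(Suc k) * gbin i (int (Suc k) - 1)) G) (i + 1 - Suc k))"
    by (rule sum.atMost_Suc_shift)
  also have "\<dots> = (\<Sum>k\<le>Suc i. monom (smult (c^(Suc k) * of_nat (i choose k)) G) (i - k))"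
    by simp
  also have "\<dots> = (\<Sum>k\<le>i. monom (smult (of_nat (i choose k) * c^(Suc k)) G) (i - k))"
    by (simp add: mult.commute)
  finally show ?thesis .
qed

lemma sum_gbin_pred2_monom:
  fixes c :: complex
  shows "(\<Sum>j\<le>Suc (Suc i). monom (smult (c^j * (gbin i (int j - 2) * \<alpha>)) F) (i + 2 - j))
       = (\<Sum>k\<le>i. monom (smult (of_nat (i choose k) * c^(Suc (Suc k)) * \<alpha>) F) (i - k))"
proof -
  have "(\<Sum>j\<le>Suc (Suc i). monom (smult (c^j * (gbin i (int j - 2) * \<alpha>)) F) (i + 2 - j))
      = monom (smult (c^0 * (gbin i (int 0 - 2) * \<alpha>)) F) (i + 2 - 0)
        + (\<Sum>k\<le>Suc i. monom (smult (c^(Suc k) * (gbin i (int (Suc k) - 2) * \<alpha>)) F) (i + 2 - Suc k))"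
    by (rule sum.atMost_Suc_shift)
  also have "(\<Sum>k\<le>Suc i. monom (smult (c^(Suc k) * (gbin i (int (Suc k) - 2) * \<alpha>)) F) (i + 2 - Suc k))
      = monom (smult (c^(Suc 0) * (gbin i (int (Suc 0) - 2) * \<alpha>)) F) (i + 2 - Suc 0)
        + (\<Sum>k\<le>i. monom (smult (c^(Suc (Suc k)) * (gbin i (int (Suc (Suc k)) - 2) * \<alpha>)) F) (i + 2 - Suc (Suc k)))"
    by (rule sum.atMost_Suc_shift)
  finally show ?thesis by (simp add: mult.commute mult.left_commute)
qed

lemma linear_poly_power_expand:
  fixes c :: complex
  shows "[:[:c:], 1:] ^ i = (\<Sum>k\<le>i. monom [:of_nat (i choose k) * c^k:] (i - k))"
proof -
  have "[:[:c:], 1:] = [:[:c:]:] + monom 1 1" by (simp add: monom_Suc)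
  then have "[:[:c:], 1:] ^ i = (\<Sum>k\<le>i. of_nat (i choose k) * [:[:c:]:] ^ k * monom 1 1 ^ (i - k))"
    by (simp add: binomial_ring)
  also have "\<dots> = (\<Sum>k\<le>i. monom [:of_nat (i choose k) * c^k:] (i - k))"
    by (intro sum.cong refl) (simp add: poly_const_pow monom_power of_nat_poly smult_monom)
  finally show ?thesis .
qed

lemma dOm_mon_expansion:
  "dOm_mon lam \<alpha> h m f i = smult [:lam powi m:] (\<Sum>j\<le>Suc (Suc i). smult [:(- of_int m)^j:] (dOm_coeff \<alpha> h j i f))"
proof -
  define c :: complex where "c = - of_int m"
  define G where "G = opG \<alpha> h f"
  define F where "F = opF \<alpha> h f"
  define g where "g = smult (of_int m) G - smult ((of_int m)^2 * \<alpha>) F"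
  have mc: "(of_int m :: complex) = - c" by (simp add: c_def)
  have r1: "[:0, 1:] * [:f:] + [:g:] = monom f 1 + monom g 0" by (simp add: monom_Suc monom_0)
  have r2: "[:[:- of_int m:], 1:] ^ i = (\<Sum>k\<le>i. monom [:of_nat (i choose k) * c^k:] (i - k))"
    using linear_poly_power_expand[of c i] by (simp add: c_def)
  have "[:[:- of_int m:], 1:] ^ i * ([:0, 1:] * [:f:] + [:g:])
      = (\<Sum>k\<le>i. monom [:of_nat (i choose k) * c^k:] (i - k)) * (monom f 1 + monom g 0)"
    by (simp only: r1 r2)
  also have "\<dots> = (\<Sum>k\<le>i. monom (smult (of_nat (i choose k) * c^k) f) (Suc (i - k)))
      + (\<Sum>k\<le>i. monom (smult (of_nat (i choose k) * c^k) g) (i - k))"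
    by (simp add: sum_distrib_right distrib_left mult_monom sum.distrib)
  also have "(\<Sum>k\<le>i. monom (smult (of_nat (i choose k) * c^k) g) (i - k))
      = - (\<Sum>k\<le>i. monom (smult (of_nat (i choose k) * c^(Suc k)) G) (i - k))
        - (\<Sum>k\<le>i. monom (smult (of_nat (i choose k) * c^(Suc (Suc k)) * \<alpha>) F) (i - k))"
    by (simp add: g_def mc sum_negf[symmetric] sum_subtractf[symmetric] smult_diff_right diff_monom[symmetric]
          minus_monom[symmetric] power2_eq_square algebra_simps)
  finally have inner: "[:[:- of_int m:], 1:] ^ i * ([:0, 1:] * [:f:] + [:g:])
      = (\<Sum>k\<le>i. monom (smult (of_nat (i choose k) * c^k) f) (Suc (i - k)))
        - (\<Sum>k\<le>i. monom (smult (of_nat (i choose k) * c^(Suc k)) G) (i - k))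
        - (\<Sum>k\<le>i. monom (smult (of_nat (i choose k) * c^(Suc (Suc k)) * \<alpha>) F) (i - k))"
    by simp
  have "(\<Sum>j\<le>Suc (Suc i). smult [:c^j:] (dOm_coeff \<alpha> h j i f))
      = (\<Sum>j\<le>Suc (Suc i). monom (smult (c^j * gbin i (int j)) f) (i + 1 - j))
        - (\<Sum>j\<le>Suc (Suc i). monom (smult (c^j * gbin i (int j - 1)) G) (i + 1 - j))
        - (\<Sum>j\<le>Suc (Suc i). monom (smult (c^j * (gbin i (int j - 2) * \<alpha>)) F) (i + 2 - j))"
    by (simp add: dOm_coeff_def G_def F_def smult_diff_right smult_monom sum_subtractf mult_ac del: gbin_of_nat)
  also have "\<dots> = (\<Sum>k\<le>i. monom (smult (of_nat (i choose k) * c^k) f) (Suc (i - k)))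
        - (\<Sum>k\<le>i. monom (smult (of_nat (i choose k) * c^(Suc k)) G) (i - k))
        - (\<Sum>k\<le>i. monom (smult (of_nat (i choose k) * c^(Suc (Suc k)) * \<alpha>) F) (i - k))"
    by (simp only: sum_gbin_monom sum_gbin_pred_monom sum_gbin_pred2_monom)
  finally have outer: "(\<Sum>j\<le>Suc (Suc i). smult [:c^j:] (dOm_coeff \<alpha> h j i f)) = [:[:- of_int m:], 1:] ^ i * ([:0, 1:] * [:f:] + [:g:])"
    using inner by simp
  show ?thesis unfolding dOm_mon_def outer[unfolded c_def] g_def G_def F_def ..
qed

lemma dOm_coeff_eq_0: assumes "j > Suc (Suc i)" shows "dOm_coeff \<alpha> h j i f = 0"
proof -
  have e1: "int j - 1 = int (j - 1)" "int j - 2 = int (j - 2)" using assms by auto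
  show ?thesis using assms by (simp add: dOm_coeff_def e1 binomial_eq_0 del: of_nat_diff)
qed

lemma dOm_coeff_0: "dOm_coeff \<alpha> h 0 i f = monom f (Suc i)"
  by (simp add: dOm_coeff_def gbin_def)

lemma dOm_coeff_top: "dOm_coeff \<alpha> h (Suc (Suc i)) i f = - [:smult \<alpha> (opF \<alpha> h f):]"
proof -
  have "gbin i (int (Suc (Suc i))) = 0" "gbin i (int (Suc (Suc i)) - 1) = 0"
    by (simp_all add: gbin_gt)
  then show ?thesis by (simp add: dOm_coeff_def monom_0)
qed

lemma dOm_coeff_subtop: "dOm_coeff \<alpha> h (Suc i) i f = - [:opG \<alpha> h f:] - monom (smult (of_nat i * \<alpha>) (opF \<alpha> h f)) 1"
proof -
  have "gbin i (int (Suc i)) = 0" by (simp add: gbin_gt)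
  moreover have "int (Suc i) - 1 = int i" "int (Suc i) - 2 = int i - 1" by simp_all
  ultimately show ?thesis by (simp add: dOm_coeff_def monom_0 gbin_pred)
qed

lemma dT_bounded_degrees:
  fixes sc :: "complex \<Rightarrow> 'v::ab_group_add \<Rightarrow> 'v"
  assumes vs: "vector_space sc" and lin: "\<And>k. Vector_Spaces.linear sc sc (d k)"
    and dX: "degree X \<le> I" and dJ: "\<And>i. degree (coeff X i) \<le> J"
  shows "dT sc d lam \<alpha> h m X = (\<Sum>i\<le>I. \<Sum>j\<le>J. tens sc (dOm lam \<alpha> h m (monom (monom 1 j) i)) (coeff (coeff X i) j)
            + monom (monom (d m (coeff (coeff X i) j)) j) i)"
proof -
  define F where "F i j = tens sc (dOm lam \<alpha> h m (monom (monom 1 j) i)) (coeff (coeff X i) j)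
            + monom (monom (d m (coeff (coeff X i) j)) j) i" for i j
  have F0: "F i j = 0" if "coeff (coeff X i) j = 0" for i j
    using that by (simp add: F_def tens_zero_right[OF vs] linear_map_zero[OF lin])
  have inner: "(\<Sum>j\<le>degree (coeff X i). F i j) = (\<Sum>j\<le>J. F i j)" for i
    by (rule sum.mono_neutral_left) (auto simp: F0 coeff_eq_0 intro: le_trans[OF _ dJ])
  have "dT sc d lam \<alpha> h m X = (\<Sum>i\<le>degree X. \<Sum>j\<le>degree (coeff X i). F i j)"
    by (simp add: dT_def F_def)
  also have "\<dots> = (\<Sum>i\<le>degree X. \<Sum>j\<le>J. F i j)" by (simp add: inner)
  also have "\<dots> = (\<Sum>i\<le>I. \<Sum>j\<le>J. F i j)"
    by (rule sum.mono_neutral_left) (auto simp: F0 coeff_eq_0 dX intro!: sum.neutral)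
  finally show ?thesis by (simp add: F_def)
qed

lemma coeff_coeff_tens_sum:
  fixes sc :: "complex \<Rightarrow> 'v::ab_group_add \<Rightarrow> 'v"
  assumes vs: "vector_space sc"
  shows "coeff (coeff (\<Sum>i\<le>r. tens sc (monom (a i) i) (v i)) k) j
    = (if k \<le> r then sc (coeff (a k) j) (v k) else 0)"
proof -
  have "coeff (coeff (\<Sum>i\<le>r. tens sc (monom (a i) i) (v i)) k) j
      = (\<Sum>i\<le>r. sc (coeff (coeff (monom (a i) i) k) j) (v i))"
    by (simp add: coeff_sum coeff_coeff_tens[OF vs])
  also have "\<dots> = (\<Sum>i\<le>r. if i = k then sc (coeff (a k) j) (v k) else 0)"
    by (intro sum.cong refl)
      (auto simp: coeff_monom module.scale_zero_left[OF module_iff_vector_space[THEN iffD2, OF vs]])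
  finally show ?thesis by simp
qed

lemma tens_dOm_mon_coeffs:
  fixes sc :: "complex \<Rightarrow> 'v::ab_group_add \<Rightarrow> 'v"
  assumes vs: "vector_space sc" and deg: "degree f \<le> J"
  shows "(\<Sum>j\<le>J. tens sc (dOm_mon lam \<alpha> h m (monom 1 j) i) (sc (coeff f j) u))
    = tens sc (dOm_mon lam \<alpha> h m f i) u"
proof -
  have "(\<Sum>j\<le>J. tens sc (dOm_mon lam \<alpha> h m (monom 1 j) i) (sc (coeff f j) u))
      = tens sc (\<Sum>j\<le>J. dOm_mon lam \<alpha> h m (monom (coeff f j) j) i) u"
    by (simp add: tens_scale_right[OF vs] dOm_mon_smult[symmetric] smult_monom tens_sum_left[OF vs])
  also have "\<dots> = tens sc (dOm_mon lam \<alpha> h m f i) u"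
    by (simp add: dOm_mon_sum[symmetric] poly_as_sum_of_monoms'[OF deg])
  finally show ?thesis .
qed

lemma dT_killed_tensor_sum:
  fixes sc :: "complex \<Rightarrow> 'v::ab_group_add \<Rightarrow> 'v"
  assumes vs: "vector_space sc" and lin: "\<And>k. Vector_Spaces.linear sc sc (d k)"
    and killed: "\<And>i. i \<le> r \<Longrightarrow> d m (v i) = 0"
  shows "dT sc d lam \<alpha> h m (\<Sum>i\<le>r. tens sc (monom (a i) i) (v i))
    = (\<Sum>i\<le>r. tens sc (dOm_mon lam \<alpha> h m (a i) i) (v i))"
proof -
  interpret V: vector_space sc by (rule vs)
  define w where "w = (\<Sum>i\<le>r. tens sc (monom (a i) i) (v i))"
  define J where "J = (\<Sum>i\<le>r. degree (a i))"
  note cw = coeff_coeff_tens_sum[OF vs, where r=r and a=a and v=v, folded w_def]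
  have deg_a: "degree (a i) \<le> J" if "i \<le> r" for i
    unfolding J_def using that by (intro member_le_sum) auto
  have "degree w \<le> r"
    by (intro degree_le allI impI poly_eqI) (simp add: cw)
  moreover have "degree (coeff w i) \<le> J" for i
  proof (rule degree_le, intro allI impI)
    fix j assume "J < j"
    then show "coeff (coeff w i) j = 0"
      using deg_a[of i] by (cases "i \<le> r") (simp_all add: cw coeff_eq_0)
  qed
  ultimately have "dT sc d lam \<alpha> h m w = (\<Sum>i\<le>r. \<Sum>j\<le>J.
      tens sc (dOm lam \<alpha> h m (monom (monom 1 j) i)) (coeff (coeff w i) j)
        + monom (monom (d m (coeff (coeff w i) j)) j) i)"
    by (rule dT_bounded_degrees[OF vs lin])
  also have "\<dots> = (\<Sum>i\<le>r. \<Sum>j\<le>J. tens sc (dOm_mon lam \<alpha> h m (monom 1 j) i) (sc (coeff (a i) j) (v i)))"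
    by (intro sum.cong refl) (simp add: cw dOm_monom linear_map_scale[OF lin] killed)
  also have "\<dots> = (\<Sum>i\<le>r. tens sc (dOm_mon lam \<alpha> h m (a i) i) (v i))"
    by (intro sum.cong refl tens_dOm_mon_coeffs[OF vs deg_a]) simp
  finally show ?thesis by (simp add: w_def)
qed

lemma eventually_killed_finite_family:
  fixes r :: nat
  assumes "\<And>u. \<exists>M. \<forall>k\<ge>M. d k u = (0::'v::zero)"
  shows "\<exists>M::int. \<forall>i\<le>r. \<forall>k\<ge>M. d k (v i) = 0"
proof (induction r)
  case 0 then show ?case using assms[of "v 0"] by auto
next
  case (Suc r)
  then obtain M1 where M1: "\<forall>i\<le>r. \<forall>k\<ge>M1. d k (v i) = 0" by blast
  obtain M2 where M2: "\<forall>k\<ge>M2. d k (v (Suc r)) = 0" using assms by blast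
  show ?case
  proof (intro exI[of _ "max M1 M2"] allI impI)
    fix i k assume "i \<le> Suc r" "max M1 M2 \<le> k"
    then show "d k (v i) = 0" using M1 M2 by (cases "i = Suc r") auto
  qed
qed

lemma dT_tensor_sum_expansion:
  fixes sc :: "complex \<Rightarrow> 'v::ab_group_add \<Rightarrow> 'v"
  assumes vs: "vector_space sc" and lin: "\<And>k. Vector_Spaces.linear sc sc (d k)"
    and killed: "\<And>i. i \<le> r \<Longrightarrow> d m (v i) = 0"
  shows "dT sc d lam \<alpha> h m (\<Sum>i\<le>r. tens sc (monom (a i) i) (v i))
    = tscale sc (lam powi m)
        (\<Sum>j\<le>r+2. tscale sc ((- of_int m)^j) (\<Sum>i\<le>r. tens sc (dOm_coeff \<alpha> h j i (a i)) (v i)))"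
proof -
  interpret Mo: module "tscale sc" by (rule module_tscale[OF vs])
  have "tens sc (dOm_mon lam \<alpha> h m (a i) i) (v i)
      = tscale sc (lam powi m) (\<Sum>j\<le>r+2. tscale sc ((- of_int m)^j) (tens sc (dOm_coeff \<alpha> h j i (a i)) (v i)))"
    if "i \<le> r" for i
  proof -
    have "(\<Sum>j\<le>Suc (Suc i). smult [:(- of_int m)^j:] (dOm_coeff \<alpha> h j i (a i)))
        = (\<Sum>j\<le>r+2. smult [:(- of_int m)^j:] (dOm_coeff \<alpha> h j i (a i)))"
      using that by (intro sum.mono_neutral_left) (auto simp: dOm_coeff_eq_0)
    then show ?thesis
      by (simp only: dOm_mon_expansion tscale_tens[OF vs, symmetric] tens_sum_left[OF vs] finite_atMost)
  qed
  then have "dT sc d lam \<alpha> h m (\<Sum>i\<le>r. tens sc (monom (a i) i) (v i))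
      = tscale sc (lam powi m) (\<Sum>i\<le>r. \<Sum>j\<le>r+2. tscale sc ((- of_int m)^j) (tens sc (dOm_coeff \<alpha> h j i (a i)) (v i)))"
    by (simp add: dT_killed_tensor_sum[where d=d and r=r and m=m and v=v, OF vs lin killed] Mo.scale_sum_right)
  then show ?thesis
    by (simp add: sum.swap[of _ "{..r}"] Mo.scale_sum_right)
qed

context
  fixes sc :: "complex \<Rightarrow> 'v::ab_group_add \<Rightarrow> 'v" and d :: "int \<Rightarrow> 'v \<Rightarrow> 'v"
    and lam \<alpha> :: complex and h :: "complex poly" and W :: "'v poly poly set" and M :: int
  assumes vs: "vector_space sc" and lin: "\<And>k. Vector_Spaces.linear sc sc (d k)"
    and lam: "lam \<noteq> 0" and subW: "module.subspace (tscale sc) W"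
    and stab: "\<And>m x. M \<le> m \<Longrightarrow> x \<in> W \<Longrightarrow> dT sc d lam \<alpha> h m x \<in> W"
    and restricted: "\<And>u. \<exists>M. \<forall>k\<ge>M. d k u = 0"
begin

lemma dOm_coeff_sums_in_W:
  assumes w: "(\<Sum>i\<le>r. tens sc (monom (a i) i) (v i)) \<in> W" and j: "j \<le> r + 2"
  shows "(\<Sum>i\<le>r. tens sc (dOm_coeff \<alpha> h j i (a i)) (v i)) \<in> W"
proof -
  interpret Mo: module "tscale sc" by (rule module_tscale[OF vs])
  define Z where "Z j = (\<Sum>i\<le>r. tens sc (dOm_coeff \<alpha> h j i (a i)) (v i))" for j
  obtain Mv :: int where Mv: "\<forall>i\<le>r. \<forall>k\<ge>Mv. d k (v i) = 0"
    using eventually_killed_finite_family[where d=d and r=r and v=v, OF restricted] by (elim exE)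
  have Y: "(\<Sum>j\<le>r+2. tscale sc (of_nat m ^ j) (tscale sc ((-1)^j) (Z j))) \<in> W"
    if m: "m \<ge> nat (max M Mv)" for m :: nat
  proof -
    have killed: "d (int m) (v i) = 0" if "i \<le> r" for i using Mv m that by auto
    define S where "S = (\<Sum>j\<le>r+2. tscale sc ((- of_int (int m))^j) (Z j))"
    have "dT sc d lam \<alpha> h (int m) (\<Sum>i\<le>r. tens sc (monom (a i) i) (v i)) = tscale sc (lam powi int m) S"
      unfolding S_def Z_def
      by (rule dT_tensor_sum_expansion[where d=d and r=r and m="int m" and v=v, OF vs lin killed])
    moreover have "dT sc d lam \<alpha> h (int m) (\<Sum>i\<le>r. tens sc (monom (a i) i) (v i)) \<in> W"
      using m by (intro stab w) simp
    ultimately have "tscale sc (lam powi int m) S \<in> W" by simp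
    then have "tscale sc (1 / lam powi int m) (tscale sc (lam powi int m) S) \<in> W"
      by (rule Mo.subspace_scale[OF subW])
    then have "S \<in> W" using lam by simp
    moreover have "S = (\<Sum>j\<le>r+2. tscale sc (of_nat m ^ j) (tscale sc ((-1)^j) (Z j)))"
      unfolding S_def by (intro sum.cong refl) (simp add: power_minus[of "of_nat m :: complex"] mult.commute)
    ultimately show ?thesis by simp
  qed
  have "tscale sc ((-1)^j) (Z j) \<in> W"
    by (rule subspace_coeffs_of_polynomial_values[OF module_tscale[OF vs] subW,
        where M="nat (max M Mv)" and J="r+2" and X="\<lambda>j. tscale sc ((-1)^j) (Z j)"])
      (fact Y, fact j)
  then have "tscale sc ((-1)^j) (tscale sc ((-1)^j) (Z j)) \<in> W"
    using Mo.subspace_scale[OF subW] by blast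
  then show ?thesis by (simp add: Z_def[symmetric] power_mult_distrib[symmetric])
qed

lemma shifted_sums_in_W:
  assumes w: "(\<Sum>i\<le>r. tens sc (monom (a i) i) (v i)) \<in> W" and j: "j \<le> r + 2"
  shows "(\<Sum>i = j - 2..r. tens sc
      (monom (smult (gbin i (int j)) (a i)) (i + 1 - j)
       - monom (smult (gbin i (int j - 1)) (opG \<alpha> h (a i))) (i + 1 - j)
       - monom (smult (gbin i (int j - 2) * \<alpha>) (opF \<alpha> h (a i))) (i + 2 - j)) (v i)) \<in> W"
proof -
  have "(\<Sum>i = j - 2..r. tens sc (dOm_coeff \<alpha> h j i (a i)) (v i)) = (\<Sum>i\<le>r. tens sc (dOm_coeff \<alpha> h j i (a i)) (v i))"
    by (rule sum.mono_neutral_left) (auto simp: dOm_coeff_eq_0 tens_zero_left[OF vs])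
  then show ?thesis using dOm_coeff_sums_in_W[OF w j] by (simp add: dOm_coeff_def)
qed

lemma s_times_in_W:
  assumes w: "(\<Sum>i\<le>r. tens sc (monom (a i) i) (v i)) \<in> W"
  shows "(\<Sum>i\<le>r. tens sc (monom (a i) (i + 1)) (v i)) \<in> W"
  using dOm_coeff_sums_in_W[OF w, of 0] by (simp add: dOm_coeff_0)

lemma top_coeff_in_W:
  assumes w: "(\<Sum>i\<le>r. tens sc (monom (a i) i) (v i)) \<in> W"
  shows "tens sc [:smult \<alpha> (opF \<alpha> h (a r)):] (v r) \<in> W"
proof -
  have "(\<Sum>i\<le>r. tens sc (dOm_coeff \<alpha> h (r + 2) i (a i)) (v i))
      = (\<Sum>i\<in>{r}. tens sc (dOm_coeff \<alpha> h (r + 2) i (a i)) (v i))"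
    by (rule sum.mono_neutral_right) (auto simp: dOm_coeff_eq_0 tens_zero_left[OF vs])
  also have "\<dots> = tens sc (dOm_coeff \<alpha> h (r + 2) r (a r)) (v r)" by simp
  also have "\<dots> = - tens sc [:smult \<alpha> (opF \<alpha> h (a r)):] (v r)"
    using dOm_coeff_top[of \<alpha> h r "a r"] by (simp add: tens_minus_left[OF vs] tens_const_uminus[OF vs])
  finally show ?thesis
    using dOm_coeff_sums_in_W[OF w, of "r + 2"] module.subspace_neg[OF module_tscale[OF vs] subW] by fastforce
qed

lemma subtop_coeff_in_W:
  assumes w: "(\<Sum>i\<le>r. tens sc (monom (a i) i) (v i)) \<in> W"
  shows "tens sc [:opG \<alpha> h (a r):] (v r)
    + (if r \<ge> 1 then tens sc [:smult \<alpha> (opF \<alpha> h (a (r - 1))):] (v (r - 1)) else 0) \<in> W"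
proof -
  interpret Mo: module "tscale sc" by (rule module_tscale[OF vs])
  define F where "F = tens sc [:smult \<alpha> (opF \<alpha> h (a r)):] (v r)"
  define X where "X = tens sc (monom (smult \<alpha> (opF \<alpha> h (a r))) 1) (v r)"
  define R where "R = (if r \<ge> 1 then tens sc [:smult \<alpha> (opF \<alpha> h (a (r - 1))):] (v (r - 1)) else 0)"
  \<comment> \<open>The \<open>s\<close>-linear part of the top term of the \<open>j = r + 1\<close> sum is cancelled by \<open>s\<close> times
    the \<open>j = r + 2\<close> vector.\<close>
  have "X \<in> W"
    using s_times_in_W[where a="\<lambda>_. smult \<alpha> (opF \<alpha> h (a r))" and r=0 and v="\<lambda>_. v r"] top_coeff_in_W[OF w]
    by (simp add: X_def monom_0)
  have "(\<Sum>i\<le>r. tens sc (dOm_coeff \<alpha> h (r + 1) i (a i)) (v i))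
      = - tens sc [:opG \<alpha> h (a r):] (v r) - tscale sc (of_nat r) X - R"
  proof (cases r)
    case 0
    then show ?thesis
      by (simp add: R_def X_def dOm_coeff_subtop tens_diff_left[OF vs] tens_minus_left[OF vs]
          tens_const_uminus[OF vs] tens_zero_left[OF vs] tscale_tens[OF vs])
  next
    case (Suc r0)
    have "(\<Sum>i\<le>r. tens sc (dOm_coeff \<alpha> h (r + 1) i (a i)) (v i))
        = (\<Sum>i\<in>{r0, r}. tens sc (dOm_coeff \<alpha> h (r + 1) i (a i)) (v i))"
      by (rule sum.mono_neutral_right) (auto simp: Suc dOm_coeff_eq_0 tens_zero_left[OF vs])
    also have "\<dots> = tens sc (dOm_coeff \<alpha> h (Suc r) r (a r)) (v r)
        + tens sc (dOm_coeff \<alpha> h (Suc (Suc r0)) r0 (a r0)) (v r0)"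
      by (simp add: Suc)
    finally have "(\<Sum>i\<le>r. tens sc (dOm_coeff \<alpha> h (r + 1) i (a i)) (v i))
        = tens sc (dOm_coeff \<alpha> h (Suc r) r (a r)) (v r)
        + tens sc (dOm_coeff \<alpha> h (Suc (Suc r0)) r0 (a r0)) (v r0)" .
    then show ?thesis
      by (simp add: Suc R_def X_def dOm_coeff_subtop dOm_coeff_top tens_diff_left[OF vs] tens_minus_left[OF vs]
          tens_const_uminus[OF vs] tscale_tens[OF vs] smult_monom mult.commute)
  qed
  then have "- tens sc [:opG \<alpha> h (a r):] (v r) - tscale sc (of_nat r) X - R \<in> W"
    using dOm_coeff_sums_in_W[OF w, of "r + 1"] by simp
  then have "- (- tens sc [:opG \<alpha> h (a r):] (v r) - tscale sc (of_nat r) X - R) - tscale sc (of_nat r) X \<in> W"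
    using \<open>X \<in> W\<close> Mo.subspace_neg[OF subW] Mo.subspace_diff[OF subW] Mo.subspace_scale[OF subW] by blast
  then show ?thesis by (simp add: R_def algebra_simps)
qed

end


theorem proposition3p1:
  fixes sc :: "complex \<Rightarrow> 'v \<Rightarrow> 'v::ab_group_add"
    and d :: "int \<Rightarrow> 'v \<Rightarrow> 'v" and cc :: "'v \<Rightarrow> 'v"
    and lam \<alpha> :: complex and h :: "complex poly"
    and W :: "'v poly poly set"
    and r :: nat and a :: "nat \<Rightarrow> complex poly" and v :: "nat \<Rightarrow> 'v"
  assumes lam: "lam \<noteq> 0"
    and irr: "irreducible_vir sc d cc"
    and lf: "\<exists>N::int. \<forall>k\<ge>N. locally_finite_op sc (d k)"
    and subW: "module.subspace (tscale sc) W"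
    and stabW: "\<exists>M::int. \<forall>m\<ge>M. \<forall>x\<in>W. dT sc d lam \<alpha> h m x \<in> W"
    and wW: "(\<Sum>i\<le>r. tens sc (monom (a i) i) (v i)) \<in> W"
  shows "(\<forall>j\<le>r + 2.
           (\<Sum>i = j - 2..r. tens sc
              (monom (smult (gbin i (int j)) (a i)) (i + 1 - j)
               - monom (smult (gbin i (int j - 1)) (opG \<alpha> h (a i))) (i + 1 - j)
               - monom (smult (gbin i (int j - 2) * \<alpha>) (opF \<alpha> h (a i))) (i + 2 - j))
              (v i)) \<in> W)
       \<and> (\<Sum>i\<le>r. tens sc (monom (a i) (i + 1)) (v i)) \<in> W
       \<and> tens sc [:opG \<alpha> h (a r):] (v r)
           + (if r \<ge> 1 then tens sc [:smult \<alpha> (opF \<alpha> h (a (r - 1))):] (v (r - 1)) else 0) \<in> W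
       \<and> tens sc [:smult \<alpha> (opF \<alpha> h (a r)):] (v r) \<in> W"
proof -
  have vs: "vector_space sc" and lin: "\<And>k. Vector_Spaces.linear sc sc (d k)"
    using irr by (auto simp: irreducible_vir_def vir_module_def)
  have restricted: "\<And>u. \<exists>M. \<forall>k\<ge>M. d k u = 0"
    by (rule irreducible_vir_restricted[OF irr lf])
  obtain M where stab: "\<And>m x. M \<le> m \<Longrightarrow> x \<in> W \<Longrightarrow> dT sc d lam \<alpha> h m x \<in> W"
    using stabW by blast
  note setting = vs lin lam subW stab restricted
  show ?thesis
    using shifted_sums_in_W[OF setting wW] s_times_in_W[OF setting wW]
      subtop_coeff_in_W[OF setting wW] top_coeff_in_W[OF setting wW] by blast
qed

end
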